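(* Let $p,g_i,S,d,R,\eta_i,\beta,f_\gamma,N,D,p^*$ and $Pol^r_{n',2d'}$ be as in the context. For each positive integer $r$ let $$l_r=\sup\Big\{\gamma\in\mathbb{R} : f_\gamma(z)-\tfrac{1}{r}\big(\textstyle\sum_{i=1}^N z_i^2\big)^D\in Pol^r_{N,2D}\Big\}$$ (with $\sup\emptyset=-\infty$), and let $m_r=\max_{i=1,\dots,r}l_i$. Then $m_r\le p^*$ for all $r$, $\{m_r\}$ is nondecreasing, and $\lim_{r\to\infty}m_r=p^*$.
   Context: Let $p,g_1,\dots,g_m$ be real polynomials in $x=(x_1,\dots,x_n)$ and let $S=\{x\in\mathbb{R}^n : g_i(x)\ge 0,\ i=1,\dots,m\}$. Let $p^*=\inf_{x\in S}p(x)$ (with $p^*=+\infty$ if $S=\emptyset$). Let $d\ge 1$ be the integer such that $2d$ is the smallest even integer larger than or equal to the maximum of the degrees of $p,g_1,\dots,g_m$. Assume there is $R>0$ with $\sum_{i=1}^n x_i^2\le R$ for all $x\in S$. Let $\eta_1,\dots,\eta_m$ be real numbers with $g_i(x)\le\eta_i$ for all $x\in S$, and let $\beta$ be a real number with $-p(x)\le\beta$ for all $x\in S$. For a polynomial $q$ in $x$ of degree at most $2d$, $y^{2d}q(x/y)$ denotes its homogenization to a form of degree $2d$ in $(x,y)$. For $\gamma\in\mathbb{R}$ define the form in the variables $z=(x,s,y)=(x_1,\dots,x_n,s_0,\dots,s_{m+1},y)$: $$f_\gamma(x,s,y)=\big(\gamma y^{2d}-y^{2d}p(x/y)-s_0^2y^{2d-2}\big)^2+\sum_{i=1}^m\big(y^{2d}g_i(x/y)-s_i^2y^{2d-2}\big)^2+\Big(\big(R+\textstyle\sum_{i=1}^m\eta_i+\beta+\gamma\big)^d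 y^{2d}-\big(\sum_{i=1}^n x_i^2+\sum_{i=0}^m s_i^2\big)^d-s_{m+1}^{2d}\Big)^2.$$ Set $N=n+m+3$ and $D=2d$, so $f_\gamma$ is a form of degree $2D$ in $N$ variables. For a form $q$ in $n'$ variables and $v,w\in\mathbb{R}^{n'}$, $q(v^2-w^2)$ denotes $q(v_1^2-w_1^2,\dots,v_{n'}^2-w_{n'}^2)$. For integers $n',d',r\ge1$ define $Pol^r_{n',2d'}$ as the set of forms $q$ of degree $2d'$ in $n'$ variables such that the polynomial $$\Big(q(v^2-w^2)+\tfrac{1}{2r}\Big(\sum_{i=1}^{n'}(v_i^4+w_i^4)\Big)^{d'}\Big)\cdot\Big(\sum_{i=1}^{n'}v_i^2+\sum_{i=1}^{n'}w_i^2\Big)^{r^2}$$ in the variables $(v,w)\in\mathbb{R}^{2n'}$ has all coefficients nonnegative. *)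

theory Defs
  imports "HOL-Analysis.Analysis" "HOL-Library.Poly_Mapping"
begin

text \<open>Real multivariate polynomials in countably many variables indexed by nat:
  a monomial is a finitely supported exponent vector, a polynomial maps monomials
  to their coefficients.\<close>

type_synonym mpoly = "(nat \<Rightarrow>\<^sub>0 nat) \<Rightarrow>\<^sub>0 real"

definition mp_const :: "real \<Rightarrow> mpoly" where
  "mp_const c = Poly_Mapping.single 0 c"

definition mp_var :: "nat \<Rightarrow> mpoly" where
  "mp_var i = Poly_Mapping.single (Poly_Mapping.single i 1) 1"

definition mp_coeff :: "mpoly \<Rightarrow> (nat \<Rightarrow>\<^sub>0 nat) \<Rightarrow> real" where
  "mp_coeff q a = Poly_Mapping.lookup q a"

definition mon_deg :: "(nat \<Rightarrow>\<^sub>0 nat) \<Rightarrow> nat" where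
  "mon_deg a = (\<Sum>i\<in>Poly_Mapping.keys a. Poly_Mapping.lookup a i)"

definition mp_deg :: "mpoly \<Rightarrow> nat" where
  "mp_deg q = Max (insert 0 (mon_deg ` Poly_Mapping.keys q))"

definition mp_vars :: "mpoly \<Rightarrow> nat set" where
  "mp_vars q = (\<Union>a\<in>Poly_Mapping.keys q. Poly_Mapping.keys a)"

definition mp_homogeneous :: "nat \<Rightarrow> mpoly \<Rightarrow> bool" where
  "mp_homogeneous k q \<longleftrightarrow> (\<forall>a\<in>Poly_Mapping.keys q. mon_deg a = k)"

definition mp_eval :: "(nat \<Rightarrow> real) \<Rightarrow> mpoly \<Rightarrow> real" where
  "mp_eval x q = (\<Sum>a\<in>Poly_Mapping.keys q.
       Poly_Mapping.lookup q a * (\<Prod>i\<in>Poly_Mapping.keys a. x i ^ Poly_Mapping.lookup a i))"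

definition mp_subst :: "(nat \<Rightarrow> mpoly) \<Rightarrow> mpoly \<Rightarrow> mpoly" where
  "mp_subst \<sigma> q = (\<Sum>a\<in>Poly_Mapping.keys q.
       mp_const (Poly_Mapping.lookup q a) * (\<Prod>i\<in>Poly_Mapping.keys a. \<sigma> i ^ Poly_Mapping.lookup a i))"

text \<open>homogenization y^k q(x/y) of q (deg q \<le> k) to a form of degree k, using the
  variable with index y as homogenizing variable:
  each monomial x^a becomes x^a y^(k - |a|).\<close>
definition mp_homogenize :: "nat \<Rightarrow> nat \<Rightarrow> mpoly \<Rightarrow> mpoly" where
  "mp_homogenize k y q = (\<Sum>a\<in>Poly_Mapping.keys q.
       Poly_Mapping.single (a + Poly_Mapping.single y (k - mon_deg a)) (Poly_Mapping.lookup q a))"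

text \<open>The form f_gamma. Variable layout of z = (x,s,y):
  x_i (i = 1..n) has index i-1, s_j (j = 0..m+1) has index n+j, y has index n+m+2.
  The g_i are indexed by i = 1..m, as are the eta_i.\<close>
definition f_gamma ::
  "nat \<Rightarrow> nat \<Rightarrow> nat \<Rightarrow> mpoly \<Rightarrow> (nat \<Rightarrow> mpoly) \<Rightarrow> real \<Rightarrow> (nat \<Rightarrow> real) \<Rightarrow> real \<Rightarrow> real \<Rightarrow> mpoly" where
  "f_gamma n m d p g R \<eta> \<beta> \<gamma> =
     (let Y = mp_var (n + m + 2); S = (\<lambda>j. mp_var (n + j)); X = (\<lambda>i. mp_var i);
          H = mp_homogenize (2*d) (n + m + 2)
      in (mp_const \<gamma> * Y ^ (2*d) - H p - S 0 ^ 2 * Y ^ (2*d - 2)) ^ 2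
         + (\<Sum>i=1..m. (H (g i) - S i ^ 2 * Y ^ (2*d - 2)) ^ 2)
         + (mp_const ((R + (\<Sum>i=1..m. \<eta> i) + \<beta> + \<gamma>) ^ d) * Y ^ (2*d)
             - ((\<Sum>i<n. X i ^ 2) + (\<Sum>j=0..m. S j ^ 2)) ^ d - S (m + 1) ^ (2*d)) ^ 2)"

text \<open>Pol^r_{n',2d'}: variables v_i (i=1..n') have index i-1, w_i have index n'+i-1.\<close>
definition Pol :: "nat \<Rightarrow> nat \<Rightarrow> nat \<Rightarrow> mpoly set" where
  "Pol r n' d' = {q. mp_homogeneous (2*d') q \<and> mp_vars q \<subseteq> {..<n'} \<and>
     (let V = (\<lambda>i. mp_var i); W = (\<lambda>i. mp_var (n' + i));
          P = (mp_subst (\<lambda>i. V i ^ 2 - W i ^ 2) q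
                + mp_const (1 / (2 * real r)) * (\<Sum>i<n'. V i ^ 4 + W i ^ 4) ^ d')
              * (\<Sum>i<n'. V i ^ 2 + W i ^ 2) ^ (r ^ 2)
      in \<forall>a. mp_coeff P a \<ge> 0)}"

end

theory Submission
  imports Defs
begin

text \<open>For \<open>\<gamma> < p\<^sup>*\<close> the form \<open>f\<^sub>\<gamma>\<close> is positive definite: a real zero with \<open>y \<noteq> 0\<close>
  dehomogenizes to a feasible point with \<open>p \<le> \<gamma>\<close>, and the ball term rules out zeros with
  \<open>y = 0\<close>.  By compactness of the sphere \<open>f\<^sub>\<gamma> \<ge> \<epsilon> |z|\<^sup>4\<^sup>d\<close>, and a quantitative Polya
  theorem (with the explicit exponent \<open>r\<^sup>2\<close>) then puts \<open>f\<^sub>\<gamma> - |z|\<^sup>4\<^sup>d/r\<close> into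
  \<open>Pol\<^sup>r\<close> for all large \<open>r\<close>, so \<open>l\<^sub>r \<ge> \<gamma>\<close> eventually.  Conversely, if \<open>\<gamma> > p\<^sup>*\<close>
  a feasible point with \<open>p < \<gamma>\<close> yields a zero \<open>z\<close> of \<open>f\<^sub>\<gamma>\<close> with \<open>y = 1\<close>; evaluating
  a certificate of membership at \<open>v = \<surd>z\<^sup>+, w = \<surd>z\<^sup>-\<close> would give
  \<open>-|z|\<^sup>4\<^sup>d/r + |z|\<^sup>4\<^sup>d/(2r) \<ge> 0\<close>, which is absurd.\<close>

section \<open>Evaluation and substitution\<close>

definition mon_eval :: "(nat \<Rightarrow> 'b::comm_ring_1) \<Rightarrow> (nat \<Rightarrow>\<^sub>0 nat) \<Rightarrow> 'b" where
  "mon_eval \<sigma> a = (\<Prod>i\<in>Poly_Mapping.keys a. \<sigma> i ^ Poly_Mapping.lookup a i)"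

text \<open>Evaluation at a point (\<open>\<kappa> = id\<close>) and substitution (\<open>\<kappa> = mp_const\<close>) are both
  evaluations along a ring homomorphism \<open>\<kappa>\<close> on the coefficients.\<close>

definition mp_hom_eval :: "(real \<Rightarrow> 'b::comm_ring_1) \<Rightarrow> (nat \<Rightarrow> 'b) \<Rightarrow> mpoly \<Rightarrow> 'b" where
  "mp_hom_eval \<kappa> \<sigma> q = (\<Sum>a\<in>Poly_Mapping.keys q. \<kappa> (Poly_Mapping.lookup q a) * mon_eval \<sigma> a)"

lemma mon_eval_superset:
  assumes "finite A" "Poly_Mapping.keys a \<subseteq> A"
  shows "mon_eval \<sigma> a = (\<Prod>i\<in>A. \<sigma> i ^ Poly_Mapping.lookup a i)"
  unfolding mon_eval_def
  by (rule prod.mono_neutral_left) (use assms in \<open>auto simp: in_keys_iff\<close>)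

lemma mon_eval_zero [simp]: "mon_eval \<sigma> 0 = 1"
  by (simp add: mon_eval_def)

lemma mon_eval_single [simp]: "mon_eval \<sigma> (Poly_Mapping.single i k) = \<sigma> i ^ k"
  by (simp add: mon_eval_def)

lemma mon_eval_add: "mon_eval \<sigma> (a + b) = mon_eval \<sigma> a * mon_eval \<sigma> b"
proof -
  let ?A = "Poly_Mapping.keys a \<union> Poly_Mapping.keys b"
  have "mon_eval \<sigma> (a + b) = (\<Prod>i\<in>?A. \<sigma> i ^ Poly_Mapping.lookup (a + b) i)"
    by (rule mon_eval_superset) (simp_all add: keys_add)
  also have "\<dots> = (\<Prod>i\<in>?A. \<sigma> i ^ Poly_Mapping.lookup a i) * (\<Prod>i\<in>?A. \<sigma> i ^ Poly_Mapping.lookup b i)"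
    by (simp add: lookup_add power_add prod.distrib)
  also have "\<dots> = mon_eval \<sigma> a * mon_eval \<sigma> b"
    by (simp add: mon_eval_superset[of ?A])
  finally show ?thesis .
qed

lemma mon_eval_cong:
  "(\<And>i. i \<in> Poly_Mapping.keys a \<Longrightarrow> x i = y i) \<Longrightarrow> mon_eval x a = mon_eval y a"
  unfolding mon_eval_def by (rule prod.cong) auto

lemma mon_eval_scale: "mon_eval (\<lambda>i. c * x i) a = c ^ mon_deg a * mon_eval x a"
  by (simp add: mon_eval_def mon_deg_def power_mult_distrib prod.distrib power_sum)

lemma poly_mapping_sum_single:
  "p = (\<Sum>a\<in>Poly_Mapping.keys p. Poly_Mapping.single a (Poly_Mapping.lookup p a))"
proof (rule poly_mapping_eqI)
  fix k
  show "Poly_Mapping.lookup p k = Poly_Mapping.lookup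
      (\<Sum>a\<in>Poly_Mapping.keys p. Poly_Mapping.single a (Poly_Mapping.lookup p a)) k"
    by (simp add: lookup_sum lookup_single when_def in_keys_iff sum.delta' eq_commute[of _ k]
        cong: if_cong)
qed

locale coeff_hom =
  fixes \<kappa> :: "real \<Rightarrow> 'b::comm_ring_1"
  assumes add: "\<And>x y. \<kappa> (x + y) = \<kappa> x + \<kappa> y" and mult: "\<And>x y. \<kappa> (x * y) = \<kappa> x * \<kappa> y"
    and zero: "\<kappa> 0 = 0" and one: "\<kappa> 1 = 1"
begin

lemma hom_eval_superset:
  assumes "finite A" "Poly_Mapping.keys q \<subseteq> A"
  shows "mp_hom_eval \<kappa> \<sigma> q = (\<Sum>a\<in>A. \<kappa> (Poly_Mapping.lookup q a) * mon_eval \<sigma> a)"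
  unfolding mp_hom_eval_def
  by (rule sum.mono_neutral_left) (use assms in \<open>auto simp: in_keys_iff zero\<close>)

lemma hom_eval_zero [simp]: "mp_hom_eval \<kappa> \<sigma> 0 = 0"
  by (simp add: mp_hom_eval_def)

lemma hom_eval_single: "mp_hom_eval \<kappa> \<sigma> (Poly_Mapping.single a c) = \<kappa> c * mon_eval \<sigma> a"
  by (simp add: mp_hom_eval_def zero)

lemma hom_eval_add: "mp_hom_eval \<kappa> \<sigma> (p + q) = mp_hom_eval \<kappa> \<sigma> p + mp_hom_eval \<kappa> \<sigma> q"
proof -
  let ?A = "Poly_Mapping.keys p \<union> Poly_Mapping.keys q"
  have "mp_hom_eval \<kappa> \<sigma> (p + q) = (\<Sum>a\<in>?A. \<kappa> (Poly_Mapping.lookup (p + q) a) * mon_eval \<sigma> a)"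
    by (rule hom_eval_superset) (simp_all add: keys_add)
  also have "\<dots> = (\<Sum>a\<in>?A. \<kappa> (Poly_Mapping.lookup p a) * mon_eval \<sigma> a)
                 + (\<Sum>a\<in>?A. \<kappa> (Poly_Mapping.lookup q a) * mon_eval \<sigma> a)"
    by (simp add: lookup_add add distrib_right sum.distrib)
  also have "\<dots> = mp_hom_eval \<kappa> \<sigma> p + mp_hom_eval \<kappa> \<sigma> q"
    by (simp add: hom_eval_superset[of ?A])
  finally show ?thesis .
qed

lemma hom_eval_sum: "mp_hom_eval \<kappa> \<sigma> (\<Sum>i\<in>I. f i) = (\<Sum>i\<in>I. mp_hom_eval \<kappa> \<sigma> (f i))"
  by (induction I rule: infinite_finite_induct) (simp_all add: hom_eval_add)

lemma hom_eval_mult: "mp_hom_eval \<kappa> \<sigma> (p * q) = mp_hom_eval \<kappa> \<sigma> p * mp_hom_eval \<kappa> \<sigma> q"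
proof -
  let ?P = "Poly_Mapping.keys p" and ?Q = "Poly_Mapping.keys q"
  have "p * q = (\<Sum>a\<in>?P. Poly_Mapping.single a (Poly_Mapping.lookup p a))
              * (\<Sum>b\<in>?Q. Poly_Mapping.single b (Poly_Mapping.lookup q b))"
    by (subst (1) poly_mapping_sum_single[of p], subst (1) poly_mapping_sum_single[of q]) (rule refl)
  also have "\<dots> = (\<Sum>a\<in>?P. \<Sum>b\<in>?Q.
      Poly_Mapping.single (a + b) (Poly_Mapping.lookup p a * Poly_Mapping.lookup q b))"
    unfolding sum_product mult_single ..
  finally have "mp_hom_eval \<kappa> \<sigma> (p * q) = (\<Sum>a\<in>?P. \<Sum>b\<in>?Q.
      \<kappa> (Poly_Mapping.lookup p a) * mon_eval \<sigma> a * (\<kappa> (Poly_Mapping.lookup q b) * mon_eval \<sigma> b))"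
    by (simp add: hom_eval_sum hom_eval_single mult mon_eval_add algebra_simps)
  also have "\<dots> = mp_hom_eval \<kappa> \<sigma> p * mp_hom_eval \<kappa> \<sigma> q"
    by (simp add: mp_hom_eval_def sum_product)
  finally show ?thesis .
qed

lemma hom_eval_one: "mp_hom_eval \<kappa> \<sigma> 1 = 1"
  using hom_eval_single[of \<sigma> 0 1] by (simp add: one)

lemma hom_eval_uminus: "mp_hom_eval \<kappa> \<sigma> (- p) = - mp_hom_eval \<kappa> \<sigma> p"
  using hom_eval_add[of \<sigma> "- p" p] by (simp add: eq_neg_iff_add_eq_0)

lemma hom_eval_diff: "mp_hom_eval \<kappa> \<sigma> (p - q) = mp_hom_eval \<kappa> \<sigma> p - mp_hom_eval \<kappa> \<sigma> q"
  using hom_eval_add[of \<sigma> p "- q"] by (simp add: hom_eval_uminus)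

lemma hom_eval_power: "mp_hom_eval \<kappa> \<sigma> (p ^ k) = mp_hom_eval \<kappa> \<sigma> p ^ k"
  by (induction k) (simp_all add: hom_eval_one hom_eval_mult)

lemma hom_eval_prod: "mp_hom_eval \<kappa> \<sigma> (\<Prod>i\<in>I. f i) = (\<Prod>i\<in>I. mp_hom_eval \<kappa> \<sigma> (f i))"
  by (induction I rule: infinite_finite_induct) (simp_all add: hom_eval_one hom_eval_mult)

end

interpretation eval_hom: coeff_hom "\<lambda>c::real. c"
  by unfold_locales simp_all

interpretation subst_hom: coeff_hom mp_const
  by unfold_locales (simp_all add: mp_const_def single_add mult_single)

lemma mp_eval_eq_hom_eval: "mp_eval x q = mp_hom_eval (\<lambda>c. c) x q"
  by (simp add: mp_eval_def mp_hom_eval_def mon_eval_def)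

lemma mp_subst_eq_hom_eval: "mp_subst \<sigma> q = mp_hom_eval mp_const \<sigma> q"
  by (simp add: mp_subst_def mp_hom_eval_def mon_eval_def)

lemma mp_eval_add [simp]: "mp_eval x (p + q) = mp_eval x p + mp_eval x q"
  and mp_eval_diff [simp]: "mp_eval x (p - q) = mp_eval x p - mp_eval x q"
  and mp_eval_mult [simp]: "mp_eval x (p * q) = mp_eval x p * mp_eval x q"
  and mp_eval_power [simp]: "mp_eval x (p ^ k) = mp_eval x p ^ k"
  and mp_eval_sum [simp]: "mp_eval x (\<Sum>i\<in>I. f i) = (\<Sum>i\<in>I. mp_eval x (f i))"
  and mp_eval_single: "mp_eval x (Poly_Mapping.single a c) = c * mon_eval x a"
  by (simp_all add: mp_eval_eq_hom_eval eval_hom.hom_eval_add eval_hom.hom_eval_diff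
      eval_hom.hom_eval_mult eval_hom.hom_eval_power eval_hom.hom_eval_sum eval_hom.hom_eval_single)

lemma mp_eval_const [simp]: "mp_eval x (mp_const c) = c"
  by (simp add: mp_const_def mp_eval_single)

lemma mp_eval_var [simp]: "mp_eval x (mp_var i) = x i"
  by (simp add: mp_var_def mp_eval_single)

lemma mp_subst_diff [simp]: "mp_subst \<sigma> (p - q) = mp_subst \<sigma> p - mp_subst \<sigma> q"
  and mp_subst_mult [simp]: "mp_subst \<sigma> (p * q) = mp_subst \<sigma> p * mp_subst \<sigma> q"
  and mp_subst_single: "mp_subst \<sigma> (Poly_Mapping.single a c) = mp_const c * mon_eval \<sigma> a"
  by (simp_all add: mp_subst_eq_hom_eval subst_hom.hom_eval_diff
      subst_hom.hom_eval_mult subst_hom.hom_eval_single)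

lemma mp_subst_const [simp]: "mp_subst \<sigma> (mp_const c) = mp_const c"
  by (simp add: mp_const_def mp_subst_single)

lemma mp_eval_subst: "mp_eval x (mp_subst \<sigma> q) = mp_eval (\<lambda>i. mp_eval x (\<sigma> i)) q"
proof -
  have mon: "mp_eval x (mon_eval \<sigma> a) = mon_eval (\<lambda>i. mp_eval x (\<sigma> i)) a" for a
    by (simp add: mon_eval_def mp_eval_eq_hom_eval eval_hom.hom_eval_prod eval_hom.hom_eval_power)
  have "mp_eval x (mp_subst \<sigma> q) =
      (\<Sum>a\<in>Poly_Mapping.keys q. Poly_Mapping.lookup q a * mon_eval (\<lambda>i. mp_eval x (\<sigma> i)) a)"
    by (simp only: mp_subst_eq_hom_eval mp_hom_eval_def mp_eval_sum mp_eval_mult mp_eval_const mon)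
  also have "\<dots> = mp_eval (\<lambda>i. mp_eval x (\<sigma> i)) q"
    by (simp add: mp_eval_def mon_eval_def)
  finally show ?thesis .
qed

lemma mp_eval_cong:
  assumes "mp_vars q \<subseteq> V" "\<And>i. i \<in> V \<Longrightarrow> x i = y i"
  shows "mp_eval x q = mp_eval y q"
  unfolding mp_eval_eq_hom_eval mp_hom_eval_def
  by (intro sum.cong refl arg_cong[where f="\<lambda>t. _ * t"] mon_eval_cong)
     (use assms in \<open>auto simp: mp_vars_def\<close>)

lemma mp_eval_nonneg:
  assumes "\<And>a. Poly_Mapping.lookup q a \<ge> 0" "\<And>i. x i \<ge> 0"
  shows "mp_eval x q \<ge> 0"
  unfolding mp_eval_def using assms by (intro sum_nonneg mult_nonneg_nonneg prod_nonneg) auto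

section \<open>Forms\<close>

lemma mon_deg_superset:
  assumes "finite A" "Poly_Mapping.keys a \<subseteq> A"
  shows "mon_deg a = (\<Sum>i\<in>A. Poly_Mapping.lookup a i)"
  unfolding mon_deg_def
  by (rule sum.mono_neutral_left) (use assms in \<open>auto simp: in_keys_iff\<close>)

lemma mon_deg_add: "mon_deg (a + b) = mon_deg a + mon_deg b"
proof -
  let ?A = "Poly_Mapping.keys a \<union> Poly_Mapping.keys b"
  have "mon_deg (a + b) = (\<Sum>i\<in>?A. Poly_Mapping.lookup (a + b) i)"
    by (rule mon_deg_superset) (simp_all add: keys_add)
  also have "\<dots> = mon_deg a + mon_deg b"
    by (simp add: lookup_add sum.distrib mon_deg_superset[of ?A])
  finally show ?thesis .
qed

lemma mon_deg_zero [simp]: "mon_deg 0 = 0"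
  by (simp add: mon_deg_def)

lemma mon_deg_single [simp]: "mon_deg (Poly_Mapping.single i k) = k"
  by (simp add: mon_deg_def)

lemma mon_deg_le_mp_deg: "a \<in> Poly_Mapping.keys q \<Longrightarrow> mon_deg a \<le> mp_deg q"
  unfolding mp_deg_def by (intro Max_ge) auto

definition mp_form_in :: "nat \<Rightarrow> nat set \<Rightarrow> mpoly \<Rightarrow> bool" where
  "mp_form_in k V q \<longleftrightarrow> (\<forall>a\<in>Poly_Mapping.keys q. mon_deg a = k \<and> Poly_Mapping.keys a \<subseteq> V)"

definition mp_even_exps :: "mpoly \<Rightarrow> bool" where
  "mp_even_exps q \<longleftrightarrow> (\<forall>a\<in>Poly_Mapping.keys q. \<forall>i. even (Poly_Mapping.lookup a i))"

lemma mp_form_in_homogeneous: "mp_form_in k V q \<Longrightarrow> mp_homogeneous k q"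
  unfolding mp_form_in_def mp_homogeneous_def by blast

lemma mp_form_in_vars: "mp_form_in k V q \<Longrightarrow> mp_vars q \<subseteq> V"
  unfolding mp_form_in_def mp_vars_def by blast

lemma mp_form_in_add: "mp_form_in k V p \<Longrightarrow> mp_form_in k V q \<Longrightarrow> mp_form_in k V (p + q)"
  using keys_add[of p q] unfolding mp_form_in_def by blast

lemma mp_form_in_diff: "mp_form_in k V p \<Longrightarrow> mp_form_in k V q \<Longrightarrow> mp_form_in k V (p - q)"
  using keys_diff[of p q] unfolding mp_form_in_def by blast

lemma mp_form_in_sum:
  "(\<And>i. i \<in> I \<Longrightarrow> mp_form_in k V (f i)) \<Longrightarrow> mp_form_in k V (\<Sum>i\<in>I. f i)"
  using keys_sum[of f I] unfolding mp_form_in_def by blast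

lemma keys_mult_closed:
  fixes p q :: mpoly
  assumes "\<forall>a\<in>Poly_Mapping.keys p. P a" "\<forall>b\<in>Poly_Mapping.keys q. Q b"
    and "\<And>a b. P a \<Longrightarrow> Q b \<Longrightarrow> R (a + b)"
  shows "\<forall>c\<in>Poly_Mapping.keys (p * q). R c"
  using keys_mult[of p q] assms by blast

lemma mp_form_in_mult:
  assumes "mp_form_in k V p" "mp_form_in l V q"
  shows "mp_form_in (k + l) V (p * q)"
  using assms unfolding mp_form_in_def
  by (rule keys_mult_closed) (auto simp: mon_deg_add dest: subsetD[OF keys_add])

lemma mp_form_in_one [simp]: "mp_form_in 0 V 1"
  by (simp add: mp_form_in_def)

lemma mp_form_in_power: "mp_form_in k V p \<Longrightarrow> mp_form_in (k * j) V (p ^ j)"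
proof (induction j)
  case (Suc j)
  then have "mp_form_in (k + k * j) V (p * p ^ j)" by (intro mp_form_in_mult) auto
  then show ?case by simp
qed simp

lemma mp_form_in_prod:
  "(\<And>i. i \<in> I \<Longrightarrow> mp_form_in (k i) V (f i)) \<Longrightarrow> mp_form_in (\<Sum>i\<in>I. k i) V (\<Prod>i\<in>I. f i)"
  by (induction I rule: infinite_finite_induct) (simp_all add: mp_form_in_mult)

lemma mp_form_in_const [simp]: "mp_form_in 0 V (mp_const c)"
  by (simp add: mp_form_in_def mp_const_def)

lemma mp_form_in_const_mult: "mp_form_in k V p \<Longrightarrow> mp_form_in k V (mp_const c * p)"
  using mp_form_in_mult[OF mp_form_in_const] by simp

lemma mp_form_in_var: "i \<in> V \<Longrightarrow> mp_form_in 1 V (mp_var i)"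
  by (simp add: mp_form_in_def mp_var_def)

lemma mp_form_in_var_power: "i \<in> V \<Longrightarrow> mp_form_in j V (mp_var i ^ j)"
  using mp_form_in_power[OF mp_form_in_var] by simp

lemma mp_form_in_mon_eval:
  assumes "\<And>i. i \<in> Poly_Mapping.keys a \<Longrightarrow> mp_form_in l V (\<sigma> i)"
  shows "mp_form_in (l * mon_deg a) V (mon_eval \<sigma> a)"
proof -
  have "mp_form_in (\<Sum>i\<in>Poly_Mapping.keys a. l * Poly_Mapping.lookup a i) V (mon_eval \<sigma> a)"
    unfolding mon_eval_def by (intro mp_form_in_prod mp_form_in_power assms)
  then show ?thesis by (simp add: mon_deg_def sum_distrib_left)
qed

lemma mp_form_in_subst:
  assumes "mp_form_in k U q" "\<And>i. i \<in> U \<Longrightarrow> mp_form_in l V (\<sigma> i)"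
  shows "mp_form_in (l * k) V (mp_subst \<sigma> q)"
  unfolding mp_subst_eq_hom_eval mp_hom_eval_def
proof (intro mp_form_in_sum mp_form_in_const_mult)
  fix a assume a: "a \<in> Poly_Mapping.keys q"
  have a_U: "Poly_Mapping.keys a \<subseteq> U" and a_deg: "mon_deg a = k"
    using assms(1) a by (auto simp: mp_form_in_def)
  have "mp_form_in (l * mon_deg a) V (mon_eval \<sigma> a)"
    using a_U assms(2) by (intro mp_form_in_mon_eval) blast
  with a_deg show "mp_form_in (l * k) V (mon_eval \<sigma> a)" by simp
qed

lemma mp_form_in_homogenize:
  assumes "mp_deg q \<le> k" "mp_vars q \<subseteq> V" "y \<in> V"
  shows "mp_form_in k V (mp_homogenize k y q)"
  unfolding mp_homogenize_def
proof (rule mp_form_in_sum)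
  fix a assume a: "a \<in> Poly_Mapping.keys q"
  have "mon_deg (a + Poly_Mapping.single y (k - mon_deg a)) = k"
    using mon_deg_le_mp_deg[OF a] assms(1) by (simp add: mon_deg_add)
  moreover have "Poly_Mapping.keys (a + Poly_Mapping.single y (k - mon_deg a)) \<subseteq> V"
    using keys_add[of a "Poly_Mapping.single y (k - mon_deg a)"] assms(2,3) a
    by (auto simp: mp_vars_def split: if_splits)
  ultimately show "mp_form_in k V
      (Poly_Mapping.single (a + Poly_Mapping.single y (k - mon_deg a)) (Poly_Mapping.lookup q a))"
    by (simp add: mp_form_in_def)
qed

lemma mp_even_exps_add: "mp_even_exps p \<Longrightarrow> mp_even_exps q \<Longrightarrow> mp_even_exps (p + q)"
  using keys_add[of p q] unfolding mp_even_exps_def by blast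

lemma mp_even_exps_diff: "mp_even_exps p \<Longrightarrow> mp_even_exps q \<Longrightarrow> mp_even_exps (p - q)"
  using keys_diff[of p q] unfolding mp_even_exps_def by blast

lemma mp_even_exps_sum:
  "(\<And>i. i \<in> I \<Longrightarrow> mp_even_exps (f i)) \<Longrightarrow> mp_even_exps (\<Sum>i\<in>I. f i)"
  using keys_sum[of f I] unfolding mp_even_exps_def by blast

lemma mp_even_exps_mult: "mp_even_exps p \<Longrightarrow> mp_even_exps q \<Longrightarrow> mp_even_exps (p * q)"
  unfolding mp_even_exps_def
  by (rule keys_mult_closed[where P="\<lambda>a. \<forall>i. even (Poly_Mapping.lookup a i)"
        and Q="\<lambda>a. \<forall>i. even (Poly_Mapping.lookup a i)"]) (auto simp: lookup_add)

lemma mp_even_exps_one [simp]: "mp_even_exps 1"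
  by (simp add: mp_even_exps_def)

lemma mp_even_exps_const [simp]: "mp_even_exps (mp_const c)"
  by (simp add: mp_even_exps_def mp_const_def)

lemma mp_even_exps_power: "mp_even_exps p \<Longrightarrow> mp_even_exps (p ^ j)"
  by (induction j) (auto intro: mp_even_exps_mult)

lemma mp_even_exps_prod:
  "(\<And>i. i \<in> I \<Longrightarrow> mp_even_exps (f i)) \<Longrightarrow> mp_even_exps (\<Prod>i\<in>I. f i)"
  by (induction I rule: infinite_finite_induct) (simp_all add: mp_even_exps_mult)

lemma mp_var_power: "mp_var i ^ j = Poly_Mapping.single (Poly_Mapping.single i j) 1"
  by (induction j) (simp_all add: mp_var_def mult_single flip: single_add)

lemma mp_even_exps_var_power: "even j \<Longrightarrow> mp_even_exps (mp_var i ^ j)"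
  by (auto simp: mp_even_exps_def mp_var_power lookup_single when_def)

lemma mp_even_exps_subst: "(\<And>i. mp_even_exps (\<sigma> i)) \<Longrightarrow> mp_even_exps (mp_subst \<sigma> q)"
  unfolding mp_subst_def
  by (intro mp_even_exps_sum mp_even_exps_mult mp_even_exps_prod mp_even_exps_power) auto

lemma mp_eval_form_scale:
  assumes "mp_form_in k V q"
  shows "mp_eval (\<lambda>i. c * x i) q = c ^ k * mp_eval x q"
proof -
  have "mp_eval (\<lambda>i. c * x i) q
      = (\<Sum>a\<in>Poly_Mapping.keys q. Poly_Mapping.lookup q a * (c ^ k * mon_eval x a))"
    unfolding mp_eval_eq_hom_eval mp_hom_eval_def mon_eval_scale
    by (rule sum.cong) (use assms in \<open>auto simp: mp_form_in_def\<close>)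
  then show ?thesis
    by (simp add: mp_eval_eq_hom_eval mp_hom_eval_def sum_distrib_left algebra_simps)
qed

lemma mp_eval_homogenize:
  assumes "mp_vars q \<subseteq> {..<n}" "mp_deg q \<le> k" "y \<ge> n" "z y \<noteq> 0"
  shows "mp_eval z (mp_homogenize k y q) = z y ^ k * mp_eval (\<lambda>i. if i < n then z i / z y else 0) q"
proof -
  define x where "x = (\<lambda>i. if i < n then z i / z y else 0)"
  have "mon_eval z a * z y ^ (k - mon_deg a) = z y ^ k * mon_eval x a"
    if a: "a \<in> Poly_Mapping.keys q" for a
  proof -
    have "mon_eval z a = mon_eval (\<lambda>i. z y * x i) a"
      by (rule mon_eval_cong) (use assms a in \<open>auto simp: x_def mp_vars_def\<close>)
    then have "mon_eval z a * z y ^ (k - mon_deg a)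
        = z y ^ (mon_deg a + (k - mon_deg a)) * mon_eval x a"
      by (simp add: mon_eval_scale power_add)
    also have "mon_deg a + (k - mon_deg a) = k" using mon_deg_le_mp_deg[OF a] assms(2) by simp
    finally show ?thesis .
  qed
  then have "mp_eval z (mp_homogenize k y q)
      = (\<Sum>a\<in>Poly_Mapping.keys q. Poly_Mapping.lookup q a * (z y ^ k * mon_eval x a))"
    unfolding mp_homogenize_def by (simp add: mp_eval_single mon_eval_add)
  then show ?thesis
    by (simp add: x_def mp_eval_eq_hom_eval mp_hom_eval_def sum_distrib_left mult_ac)
qed

section \<open>A quantitative Polya theorem\<close>

lemma add_eq_iff_eq_diff:
  fixes a b c :: "nat \<Rightarrow>\<^sub>0 nat"
  assumes "\<forall>i. Poly_Mapping.lookup b i \<le> Poly_Mapping.lookup c i"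
  shows "b + a = c \<longleftrightarrow> a = c - b"
  using assms by (auto intro!: poly_mapping_eqI simp: lookup_add lookup_minus)

lemma lookup_single_mult:
  "Poly_Mapping.lookup (Poly_Mapping.single b c * (q::mpoly)) a =
     (if \<forall>i. Poly_Mapping.lookup b i \<le> Poly_Mapping.lookup a i
      then c * Poly_Mapping.lookup q (a - b) else 0)"
proof -
  have "Poly_Mapping.single b c * q
      = (\<Sum>e\<in>Poly_Mapping.keys q. Poly_Mapping.single (b + e) (c * Poly_Mapping.lookup q e))"
    by (subst (1) poly_mapping_sum_single[of q]) (simp add: sum_distrib_left mult_single)
  then have eq: "Poly_Mapping.lookup (Poly_Mapping.single b c * q) a =
      (\<Sum>e\<in>Poly_Mapping.keys q. if b + e = a then c * Poly_Mapping.lookup q e else 0)"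
    by (simp add: lookup_sum lookup_single when_def)
  show ?thesis
  proof (cases "\<forall>i. Poly_Mapping.lookup b i \<le> Poly_Mapping.lookup a i")
    case True
    then have "Poly_Mapping.lookup (Poly_Mapping.single b c * q) a
        = (\<Sum>e\<in>Poly_Mapping.keys q. if e = a - b then c * Poly_Mapping.lookup q e else 0)"
      unfolding eq by (intro sum.cong refl) (simp add: add_eq_iff_eq_diff)
    then show ?thesis using True by (simp add: sum.delta' in_keys_iff)
  next
    case False
    then have "\<And>e. b + e \<noteq> a" by (metis le_add1 lookup_add)
    then have "Poly_Mapping.lookup (Poly_Mapping.single b c * q) a = 0" using eq by simp
    then show ?thesis using False by auto
  qed
qed

definition mp_sum_sq :: "nat \<Rightarrow> mpoly" where
  "mp_sum_sq M = (\<Sum>j<M. mp_var j ^ 2)"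

lemma lookup_sum_sq_mult:
  "Poly_Mapping.lookup (mp_sum_sq M * q) a =
     (\<Sum>j<M. if 2 \<le> Poly_Mapping.lookup a j
             then Poly_Mapping.lookup q (a - Poly_Mapping.single j 2) else 0)"
proof -
  have "mp_sum_sq M * q = (\<Sum>j<M. Poly_Mapping.single (Poly_Mapping.single j 2) 1 * q)"
    by (simp add: mp_sum_sq_def mp_var_power sum_distrib_right)
  moreover have "(\<forall>i. Poly_Mapping.lookup (Poly_Mapping.single j (2::nat)) i \<le> Poly_Mapping.lookup a i)
        \<longleftrightarrow> 2 \<le> Poly_Mapping.lookup a j" for j
    by (auto simp: lookup_single when_def)
  ultimately show ?thesis
    by (simp add: lookup_sum lookup_single_mult cong: if_cong)
qed

definition mp_l1_norm :: "mpoly \<Rightarrow> real" where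
  "mp_l1_norm q = (\<Sum>a\<in>Poly_Mapping.keys q. \<bar>Poly_Mapping.lookup q a\<bar>)"

lemma mp_l1_norm_superset:
  "finite A \<Longrightarrow> Poly_Mapping.keys q \<subseteq> A \<Longrightarrow> mp_l1_norm q = (\<Sum>a\<in>A. \<bar>Poly_Mapping.lookup q a\<bar>)"
  unfolding mp_l1_norm_def by (rule sum.mono_neutral_left) (auto simp: in_keys_iff)

lemma mp_l1_norm_nonneg: "mp_l1_norm q \<ge> 0"
  unfolding mp_l1_norm_def by (rule sum_nonneg) simp

lemma mp_l1_norm_add: "mp_l1_norm (p + q) \<le> mp_l1_norm p + mp_l1_norm q"
proof -
  let ?A = "Poly_Mapping.keys p \<union> Poly_Mapping.keys q"
  have "mp_l1_norm (p + q) = (\<Sum>a\<in>?A. \<bar>Poly_Mapping.lookup (p + q) a\<bar>)"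
    by (rule mp_l1_norm_superset) (simp_all add: keys_add)
  also have "\<dots> \<le> (\<Sum>a\<in>?A. \<bar>Poly_Mapping.lookup p a\<bar> + \<bar>Poly_Mapping.lookup q a\<bar>)"
    by (rule sum_mono) (simp add: lookup_add abs_triangle_ineq)
  also have "\<dots> = mp_l1_norm p + mp_l1_norm q"
    by (simp add: sum.distrib mp_l1_norm_superset[of ?A])
  finally show ?thesis .
qed

lemma mp_l1_norm_diff: "mp_l1_norm (p - q) \<le> mp_l1_norm p + mp_l1_norm q"
  using mp_l1_norm_add[of p "- q"] by (simp add: mp_l1_norm_def)

lemma lookup_const_mult: "Poly_Mapping.lookup (mp_const c * q) a = c * Poly_Mapping.lookup q a"
  unfolding mp_const_def lookup_single_mult by simp

lemma mp_l1_norm_const_mult: "mp_l1_norm (mp_const c * q) = \<bar>c\<bar> * mp_l1_norm q"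
proof -
  have "Poly_Mapping.keys (mp_const c * q) \<subseteq> Poly_Mapping.keys q"
    by (auto simp: in_keys_iff lookup_const_mult)
  then have "mp_l1_norm (mp_const c * q)
      = (\<Sum>a\<in>Poly_Mapping.keys q. \<bar>Poly_Mapping.lookup (mp_const c * q) a\<bar>)"
    by (intro mp_l1_norm_superset) auto
  then show ?thesis by (simp add: lookup_const_mult abs_mult mp_l1_norm_def sum_distrib_left)
qed

definition falling_fact :: "nat \<Rightarrow> nat \<Rightarrow> real" where
  "falling_fact m b = (\<Prod>j<b. real m - real j)"

lemma falling_fact_0 [simp]: "falling_fact m 0 = 1"
  by (simp add: falling_fact_def)

lemma falling_fact_Suc: "falling_fact m (Suc b) = falling_fact m b * (real m - real b)"
  by (simp add: falling_fact_def)

lemma falling_fact_eq_0: "m < b \<Longrightarrow> falling_fact m b = 0"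
  unfolding falling_fact_def by (rule prod_zero[of "{..<b}"]) (auto intro!: bexI[of _ m])

lemma falling_fact_Suc_left:
  "real (Suc m) * falling_fact m b = falling_fact (Suc m) b * (real (Suc m) - real b)"
proof (induction b)
  case (Suc b)
  have "real (Suc m) * falling_fact m (Suc b) = real (Suc m) * falling_fact m b * (real m - real b)"
    by (simp add: falling_fact_Suc)
  also have "\<dots> = falling_fact (Suc m) b * (real (Suc m) - real b) * (real m - real b)"
    using Suc by simp
  also have "\<dots> = falling_fact (Suc m) (Suc b) * (real (Suc m) - real (Suc b))"
    by (simp add: falling_fact_Suc algebra_simps)
  finally show ?case .
qed simp

lemma falling_fact_self: "falling_fact m m = fact m"
proof (induction m)
  case (Suc m)
  have "falling_fact (Suc m) m = real (Suc m) * fact m"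
    using falling_fact_Suc_left[of m m] Suc by simp
  then show ?case by (simp add: falling_fact_Suc)
qed simp

lemma falling_fact_scaled:
  assumes "t > 0"
  shows "falling_fact m b = t ^ b * (\<Prod>j<b. real m / t - real j / t)"
proof -
  have "falling_fact m b = (\<Prod>j<b. t * (real m / t - real j / t))"
    unfolding falling_fact_def using assms by (intro prod.cong refl) (simp add: field_simps)
  then show ?thesis by (simp add: prod.distrib)
qed

lemma prod_lessThan_update:
  fixes h :: "nat \<Rightarrow> 'a \<Rightarrow> 'b::comm_monoid_mult" and j M :: nat
  assumes "j < M"
  shows "(\<Prod>i<M. h i ((\<mu>(j := x)) i)) * h j (\<mu> j) = (\<Prod>i<M. h i (\<mu> i)) * h j x"
proof -
  have fin: "finite {..<M}" and jM: "j \<in> {..<M}" using assms by auto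
  have "(\<Prod>i\<in>{..<M}-{j}. h i ((\<mu>(j := x)) i)) = (\<Prod>i\<in>{..<M}-{j}. h i (\<mu> i))"
    by (rule prod.cong) auto
  then show ?thesis
    by (simp add: prod.remove[OF fin jM] mult_ac)
qed

lemma prod_fact_update:
  fixes j M :: nat
  assumes "j < M" "\<mu> j = Suc m"
  shows "(\<Prod>i<M. fact ((\<mu>(j := m)) i) :: real) * real (Suc m) = (\<Prod>i<M. fact (\<mu> i))"
proof -
  have "(\<Prod>i<M. fact ((\<mu>(j := m)) i) :: real) * fact (Suc m) = (\<Prod>i<M. fact (\<mu> i)) * fact m"
    using prod_lessThan_update[OF assms(1), where h="\<lambda>_ t. fact t :: real" and \<mu>=\<mu> and x=m] assms(2)
    by simp
  then have "((\<Prod>i<M. fact ((\<mu>(j := m)) i) :: real) * real (Suc m)) * fact m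
      = (\<Prod>i<M. fact (\<mu> i)) * fact m"
    by (simp only: fact_Suc of_nat_mult mult.assoc)
  then show ?thesis by simp
qed

lemma prod_falling_fact_update:
  fixes j M :: nat
  assumes "j < M" "\<mu> j = Suc m"
  shows "(\<Prod>i<M. falling_fact ((\<mu>(j := m)) i) (\<beta> i)) * real (Suc m)
       = (\<Prod>i<M. falling_fact (\<mu> i) (\<beta> i)) * (real (\<mu> j) - real (\<beta> j))"
proof -
  define P where "P = (\<Prod>i\<in>{..<M}-{j}. falling_fact (\<mu> i) (\<beta> i))"
  have fin: "finite {..<M}" and jM: "j \<in> {..<M}" using assms by auto
  have "(\<Prod>i\<in>{..<M}-{j}. falling_fact ((\<mu>(j := m)) i) (\<beta> i)) = P"
    unfolding P_def by (rule prod.cong) auto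
  then have "(\<Prod>i<M. falling_fact ((\<mu>(j := m)) i) (\<beta> i)) = falling_fact m (\<beta> j) * P"
    using prod.remove[OF fin jM, of "\<lambda>i. falling_fact ((\<mu>(j := m)) i) (\<beta> i)"] by simp
  moreover have "(\<Prod>i<M. falling_fact (\<mu> i) (\<beta> i)) = falling_fact (Suc m) (\<beta> j) * P"
    unfolding P_def using prod.remove[OF fin jM, of "\<lambda>i. falling_fact (\<mu> i) (\<beta> i)"] assms(2)
    by simp
  ultimately show ?thesis
    using falling_fact_Suc_left[of m "\<beta> j"] assms(2) by (simp add: mult_ac)
qed

lemma abs_prod_diff_le:
  fixes a b :: "'i \<Rightarrow> real"
  assumes "finite I" "\<And>i. i \<in> I \<Longrightarrow> \<bar>a i\<bar> \<le> 1 \<and> \<bar>b i\<bar> \<le> 1"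
  shows "\<bar>(\<Prod>i\<in>I. a i) - (\<Prod>i\<in>I. b i)\<bar> \<le> (\<Sum>i\<in>I. \<bar>a i - b i\<bar>)"
  using assms
proof (induction I rule: finite_induct)
  case (insert y F)
  let ?A = "\<Prod>i\<in>F. a i" and ?B = "\<Prod>i\<in>F. b i"
  have ay: "\<bar>a y\<bar> \<le> 1" using insert.prems by auto
  have B: "\<bar>?B\<bar> \<le> 1" unfolding abs_prod by (rule prod_le_1) (use insert.prems in auto)
  have "\<bar>a y * ?A - b y * ?B\<bar> = \<bar>a y * (?A - ?B) + (a y - b y) * ?B\<bar>"
    by (simp add: algebra_simps)
  also have "\<dots> \<le> \<bar>a y\<bar> * \<bar>?A - ?B\<bar> + \<bar>a y - b y\<bar> * \<bar>?B\<bar>"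
    by (metis abs_mult abs_triangle_ineq)
  also have "\<dots> \<le> 1 * \<bar>?A - ?B\<bar> + \<bar>a y - b y\<bar> * 1"
    by (intro add_mono mult_mono) (use ay B in auto)
  also have "\<dots> \<le> (\<Sum>i\<in>F. \<bar>a i - b i\<bar>) + \<bar>a y - b y\<bar>"
    using insert by simp
  finally show ?case using insert.hyps by simp
qed simp

lemma abs_shifted_prod_diff_le:
  fixes x :: "nat \<Rightarrow> real"
  assumes t: "t \<ge> 1" "real k \<le> t" and x: "\<And>i. i < M \<Longrightarrow> 0 \<le> x i \<and> x i \<le> 1"
    and \<beta>: "(\<Sum>i<M. \<beta> i) = k"
  shows "\<bar>(\<Prod>i<M. \<Prod>j<\<beta> i. x i - real j / t) - (\<Prod>i<M. x i ^ \<beta> i)\<bar> \<le> real k ^ 2 / t"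
proof -
  have \<beta>_le: "\<beta> i \<le> k" if "i < M" for i
    using member_le_sum[of i "{..<M}" \<beta>] \<beta> that by simp
  have shift_le_1: "\<bar>x i - real j / t\<bar> \<le> 1" if "i < M" "j < \<beta> i" for i j
  proof -
    have "real j \<le> t" using \<beta>_le[OF that(1)] that(2) t by linarith
    then have "0 \<le> real j / t" "real j / t \<le> 1" using t by auto
    then show ?thesis using x[OF that(1)] by linarith
  qed
  have factor: "\<bar>(\<Prod>j<\<beta> i. x i - real j / t) - x i ^ \<beta> i\<bar> \<le> real (\<beta> i) * real k / t"
    if i: "i < M" for i
  proof -
    have "\<bar>(\<Prod>j<\<beta> i. x i - real j / t) - (\<Prod>j<\<beta> i. x i)\<bar> \<le> (\<Sum>j<\<beta> i. \<bar>(x i - real j / t) - x i\<bar>)"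
      by (rule abs_prod_diff_le) (use shift_le_1[OF i] x[OF i] in auto)
    also have "\<dots> \<le> (\<Sum>j<\<beta> i. real k / t)"
      using \<beta>_le[OF i] t by (intro sum_mono) (auto simp: divide_right_mono)
    finally show ?thesis by simp
  qed
  have "\<bar>(\<Prod>i<M. \<Prod>j<\<beta> i. x i - real j / t) - (\<Prod>i<M. x i ^ \<beta> i)\<bar>
      \<le> (\<Sum>i<M. \<bar>(\<Prod>j<\<beta> i. x i - real j / t) - x i ^ \<beta> i\<bar>)"
    by (rule abs_prod_diff_le)
       (use shift_le_1 x in \<open>auto simp: abs_prod power_le_one intro!: prod_le_1\<close>)
  also have "\<dots> \<le> (\<Sum>i<M. real (\<beta> i) * real k / t)"
    by (rule sum_mono) (use factor in auto)
  also have "\<dots> = real (\<Sum>i<M. \<beta> i) * real k / t"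
    by (simp add: sum_distrib_right sum_divide_distrib)
  also have "\<dots> = real k ^ 2 / t"
    using \<beta> by (simp add: power2_eq_square)
  finally show ?thesis .
qed

lemma sum_lessThan_eq_imp_less:
  fixes f g :: "nat \<Rightarrow> nat"
  assumes "(\<Sum>i<M. f i) = (\<Sum>i<M. g i)" "i < M" "f i \<noteq> g i"
  shows "\<exists>j<M. f j < g j"
proof (rule ccontr)
  assume "\<not> (\<exists>j<M. f j < g j)"
  then have le: "\<forall>j\<in>{..<M}. g j \<le> f j" by auto
  moreover have "\<exists>j\<in>{..<M}. g j < f j"
    using le assms(2,3) by (metis lessThan_iff order_le_neq_trans)
  ultimately have "(\<Sum>j<M. g j) < (\<Sum>j<M. f j)"
    by (intro sum_strict_mono_ex1) auto
  with assms(1) show False by simp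
qed

text \<open>In the variables \<open>t\<^sub>i = x\<^sub>i\<^sup>2\<close> the coefficient of \<open>t\<^sup>\<mu>\<close> in \<open>(\<Sum> t\<^sub>i)\<^sup>N G\<close> is
  \<open>N!/\<mu>! \<Sum>\<^sub>\<beta> G\<^sub>\<beta> \<Prod>\<^sub>i (\<mu>\<^sub>i)\<^sub>\<beta>\<^sub>i\<close> with falling factorials (Powers and Reznick); this
  is \<open>polya_coeff\<close>.  After scaling by \<open>|\<mu>| = N + k\<close> the inner sum approximates \<open>G\<close> at the
  point \<open>\<surd>(\<mu>/|\<mu>|)\<close> of the unit sphere up to an error \<open>O(k\<^sup>2/|\<mu>|)\<close>.\<close>

locale polya_form =
  fixes G :: mpoly and M k :: nat
  assumes form_G: "mp_form_in (2*k) {..<M} G" and even_G: "mp_even_exps G"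
begin

definition half_exp :: "(nat \<Rightarrow>\<^sub>0 nat) \<Rightarrow> nat \<Rightarrow> nat" where
  "half_exp a i = Poly_Mapping.lookup a i div 2"

definition admissible :: "nat \<Rightarrow> (nat \<Rightarrow>\<^sub>0 nat) \<Rightarrow> bool" where
  "admissible N a \<longleftrightarrow> (\<forall>i. even (Poly_Mapping.lookup a i)) \<and> Poly_Mapping.keys a \<subseteq> {..<M}
     \<and> mon_deg a = 2*(N+k)"

definition polya_sum :: "(nat \<Rightarrow>\<^sub>0 nat) \<Rightarrow> real" where
  "polya_sum a = (\<Sum>b\<in>Poly_Mapping.keys G.
     Poly_Mapping.lookup G b * (\<Prod>i<M. falling_fact (half_exp a i) (half_exp b i)))"

definition polya_coeff :: "nat \<Rightarrow> (nat \<Rightarrow>\<^sub>0 nat) \<Rightarrow> real" where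
  "polya_coeff N a =
     (if admissible N a then fact N / (\<Prod>i<M. fact (half_exp a i)) * polya_sum a else 0)"

lemma keys_G:
  "b \<in> Poly_Mapping.keys G \<Longrightarrow>
     mon_deg b = 2*k \<and> Poly_Mapping.keys b \<subseteq> {..<M} \<and> (\<forall>i. even (Poly_Mapping.lookup b i))"
  using form_G even_G unfolding mp_form_in_def mp_even_exps_def by blast

lemma mon_deg_eq_sum_half_exp:
  assumes "Poly_Mapping.keys a \<subseteq> {..<M}" "\<forall>i. even (Poly_Mapping.lookup a i)"
  shows "mon_deg a = 2 * (\<Sum>i<M. half_exp a i)"
proof -
  have "mon_deg a = (\<Sum>i<M. Poly_Mapping.lookup a i)"
    by (rule mon_deg_superset) (use assms in auto)
  also have "\<dots> = (\<Sum>i<M. 2 * half_exp a i)"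
    using assms(2) by (intro sum.cong refl) (simp add: half_exp_def)
  finally show ?thesis by (simp add: sum_distrib_left)
qed

lemma sum_half_exp_admissible: "admissible N a \<Longrightarrow> (\<Sum>i<M. half_exp a i) = N + k"
  using mon_deg_eq_sum_half_exp[of a] unfolding admissible_def by auto

lemma admissible_G: "b \<in> Poly_Mapping.keys G \<Longrightarrow> admissible 0 b"
  using keys_G[of b] by (simp add: admissible_def)

lemma sum_half_exp_G: "b \<in> Poly_Mapping.keys G \<Longrightarrow> (\<Sum>i<M. half_exp b i) = k"
  using sum_half_exp_admissible[OF admissible_G] by simp

lemma admissible_eqI:
  assumes "admissible N a" "admissible N' b" "\<And>i. i < M \<Longrightarrow> half_exp a i = half_exp b i"
  shows "a = b"
proof (rule poly_mapping_eqI)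
  fix i
  show "Poly_Mapping.lookup a i = Poly_Mapping.lookup b i"
  proof (cases "i < M")
    case True
    with assms show ?thesis unfolding admissible_def half_exp_def
      by (metis dvd_mult_div_cancel)
  next
    case False
    with assms(1,2) have "i \<notin> Poly_Mapping.keys a" "i \<notin> Poly_Mapping.keys b"
      by (auto simp: admissible_def)
    then show ?thesis by (simp add: in_keys_iff)
  qed
qed

lemma prod_falling_fact_G_eq_0:
  assumes a: "admissible 0 a" and b: "b \<in> Poly_Mapping.keys G" "b \<noteq> a"
  shows "(\<Prod>i<M. falling_fact (half_exp a i) (half_exp b i)) = 0"
proof -
  obtain i where "i < M" "half_exp a i \<noteq> half_exp b i"
    using admissible_eqI[OF a admissible_G[OF b(1)]] b(2) by blast
  then obtain j where "j < M" "half_exp a j < half_exp b j"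
    using sum_lessThan_eq_imp_less[of "half_exp a" M "half_exp b"]
      sum_half_exp_admissible[OF a] sum_half_exp_G[OF b(1)] by auto
  then show ?thesis by (intro prod_zero) (auto intro!: bexI[of _ j] falling_fact_eq_0)
qed

lemma lookup_G_eq_polya_coeff: "Poly_Mapping.lookup G a = polya_coeff 0 a"
proof (cases "admissible 0 a")
  case True
  have "polya_sum a = (\<Sum>b\<in>Poly_Mapping.keys G. if b = a then
      Poly_Mapping.lookup G b * (\<Prod>i<M. falling_fact (half_exp a i) (half_exp b i)) else 0)"
    unfolding polya_sum_def by (intro sum.cong refl) (auto simp: prod_falling_fact_G_eq_0[OF True])
  also have "\<dots> = Poly_Mapping.lookup G a * (\<Prod>i<M. fact (half_exp a i))"
    by (simp add: sum.delta' in_keys_iff falling_fact_self)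
  finally show ?thesis
    using True by (simp add: polya_coeff_def prod_pos)
next
  case False
  then have "a \<notin> Poly_Mapping.keys G" using admissible_G by blast
  with False show ?thesis by (simp add: polya_coeff_def in_keys_iff)
qed

lemma admissible_minus_single_iff:
  assumes j: "j < M" "2 \<le> Poly_Mapping.lookup a j"
  shows "admissible N (a - Poly_Mapping.single j 2) \<longleftrightarrow> admissible (Suc N) a"
proof -
  let ?a = "a - Poly_Mapping.single j 2"
  have lookup_a: "Poly_Mapping.lookup a i = Poly_Mapping.lookup ?a i + (if i = j then 2 else 0)" for i
    using j(2) by (auto simp: lookup_minus lookup_single when_def)
  then have "a = ?a + Poly_Mapping.single j 2"
    by (intro poly_mapping_eqI) (simp add: lookup_add lookup_single when_def)
  then have "mon_deg a = mon_deg ?a + 2" by (metis mon_deg_add mon_deg_single)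
  moreover have "(\<forall>i. even (Poly_Mapping.lookup ?a i)) \<longleftrightarrow> (\<forall>i. even (Poly_Mapping.lookup a i))"
    by (auto simp: lookup_a)
  moreover have "Poly_Mapping.keys ?a \<subseteq> {..<M} \<longleftrightarrow> Poly_Mapping.keys a \<subseteq> {..<M}"
  proof -
    have "Poly_Mapping.keys ?a \<subseteq> Poly_Mapping.keys a"
      by (auto simp: in_keys_iff lookup_minus)
    moreover have "Poly_Mapping.keys a \<subseteq> insert j (Poly_Mapping.keys ?a)"
      by (auto simp: in_keys_iff lookup_a split: if_splits)
    ultimately show ?thesis using j(1) by blast
  qed
  ultimately show ?thesis by (auto simp: admissible_def)
qed

lemma half_exp_minus_single:
  "half_exp (a - Poly_Mapping.single j 2) = (half_exp a)(j := half_exp a j - 1)"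
  by (auto simp: fun_eq_iff half_exp_def lookup_minus lookup_single when_def; presburger)

lemma polya_coeff_minus_single:
  assumes a: "admissible (Suc N) a" and j: "j < M" "2 \<le> Poly_Mapping.lookup a j"
  shows "polya_coeff N (a - Poly_Mapping.single j 2) * (\<Prod>i<M. fact (half_exp a i))
    = fact N * (\<Sum>b\<in>Poly_Mapping.keys G. Poly_Mapping.lookup G b
        * (\<Prod>i<M. falling_fact (half_exp a i) (half_exp b i)) * (real (half_exp a j) - real (half_exp b j)))"
proof -
  let ?a = "a - Poly_Mapping.single j 2"
  obtain m where m: "half_exp a j = Suc m"
    using j(2) unfolding half_exp_def by (metis Suc_pred div_greater_zero_iff zero_less_numeral)
  have half: "half_exp ?a = (half_exp a)(j := m)"
    by (simp add: half_exp_minus_single m)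
  have D: "(\<Prod>i<M. fact (half_exp ?a i) :: real) * real (Suc m) = (\<Prod>i<M. fact (half_exp a i))"
    unfolding half by (rule prod_fact_update[where \<mu>="half_exp a", OF j(1) m])
  have "(\<Prod>i<M. falling_fact (half_exp ?a i) (half_exp b i)) * real (Suc m)
      = (\<Prod>i<M. falling_fact (half_exp a i) (half_exp b i)) * (real (half_exp a j) - real (half_exp b j))"
    for b
    unfolding half by (rule prod_falling_fact_update[where \<mu>="half_exp a", OF j(1) m])
  then have S: "polya_sum ?a * real (Suc m) = (\<Sum>b\<in>Poly_Mapping.keys G. Poly_Mapping.lookup G b
        * (\<Prod>i<M. falling_fact (half_exp a i) (half_exp b i)) * (real (half_exp a j) - real (half_exp b j)))"
    unfolding polya_sum_def sum_distrib_right by (simp add: mult.assoc)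
  have "admissible N ?a" using admissible_minus_single_iff[OF j] a by simp
  then have "polya_coeff N ?a * (\<Prod>i<M. fact (half_exp a i))
      = fact N * (polya_sum ?a * real (Suc m))"
    by (simp add: polya_coeff_def flip: D)
  then show ?thesis by (simp only: S)
qed

lemma polya_shift_term_eq_0:
  assumes "j < M" "half_exp a j = 0"
  shows "(\<Prod>i<M. falling_fact (half_exp a i) (half_exp b i)) * (real (half_exp a j) - real (half_exp b j)) = 0"
proof (cases "half_exp b j = 0")
  case False
  with assms have "falling_fact (half_exp a j) (half_exp b j) = 0" by (intro falling_fact_eq_0) simp
  with assms(1) have "(\<Prod>i<M. falling_fact (half_exp a i) (half_exp b i)) = 0"
    by (meson finite_lessThan lessThan_iff prod_zero)
  then show ?thesis by simp
qed (simp add: assms)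

lemma lookup_sum_sq_mult_polya_coeff:
  assumes IH: "\<And>c. Poly_Mapping.lookup q c = polya_coeff N c"
  shows "Poly_Mapping.lookup (mp_sum_sq M * q) a = polya_coeff (Suc N) a"
proof (cases "admissible (Suc N) a")
  case False
  then show ?thesis
    by (auto simp: lookup_sum_sq_mult IH polya_coeff_def admissible_minus_single_iff intro!: sum.neutral)
next
  case True
  define D where "D = (\<Prod>i<M. fact (half_exp a i) :: real)"
  define T where "T j b = Poly_Mapping.lookup G b * (\<Prod>i<M. falling_fact (half_exp a i) (half_exp b i))
      * (real (half_exp a j) - real (half_exp b j))" for j b
  have summand: "(if 2 \<le> Poly_Mapping.lookup a j then polya_coeff N (a - Poly_Mapping.single j 2) else 0) * D
      = fact N * (\<Sum>b\<in>Poly_Mapping.keys G. T j b)" if j: "j < M" for j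
  proof (cases "2 \<le> Poly_Mapping.lookup a j")
    case False
    moreover have "even (Poly_Mapping.lookup a j)" using True by (simp add: admissible_def)
    ultimately have "half_exp a j = 0" by (auto simp: half_exp_def elim!: evenE)
    then have "T j b = 0" for b
      using polya_shift_term_eq_0[OF j] by (simp add: T_def mult.assoc)
    then show ?thesis using False by simp
  qed (simp add: D_def T_def polya_coeff_minus_single[OF True j])
  have sum_shift: "(\<Sum>j<M. real (half_exp a j) - real (half_exp b j)) = real (Suc N)"
    if "b \<in> Poly_Mapping.keys G" for b
    using sum_half_exp_admissible[OF True] sum_half_exp_G[OF that]
    by (simp add: sum_subtractf flip: of_nat_sum)
  have "Poly_Mapping.lookup (mp_sum_sq M * q) a * D = (\<Sum>j<M. fact N * (\<Sum>b\<in>Poly_Mapping.keys G. T j b))"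
    unfolding lookup_sum_sq_mult IH sum_distrib_right by (intro sum.cong refl) (simp add: summand)
  also have "\<dots> = fact N * (\<Sum>b\<in>Poly_Mapping.keys G. \<Sum>j<M. T j b)"
    by (simp add: sum_distrib_left sum.swap[of _ "{..<M}"])
  also have "\<dots> = fact N * (polya_sum a * real (Suc N))"
    unfolding T_def polya_sum_def sum_distrib_right
    by (intro arg_cong[where f="\<lambda>t. _ * t"] sum.cong refl) (simp add: sum_shift flip: sum_distrib_left)
  also have "\<dots> = polya_coeff (Suc N) a * D"
    using True by (simp add: polya_coeff_def D_def prod_pos)
  finally show ?thesis by (simp add: D_def prod_pos)
qed

lemma lookup_sum_sq_power_mult: "Poly_Mapping.lookup (mp_sum_sq M ^ N * G) a = polya_coeff N a"
proof (induction N arbitrary: a)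
  case 0
  then show ?case by (simp add: lookup_G_eq_polya_coeff)
next
  case (Suc N)
  then show ?case
    using lookup_sum_sq_mult_polya_coeff[of "mp_sum_sq M ^ N * G"] by (simp add: mult.assoc)
qed

lemma mp_eval_G_sqrt:
  assumes "\<And>i. i < M \<Longrightarrow> x i \<ge> 0"
  shows "mp_eval (\<lambda>i. sqrt (x i)) G
    = (\<Sum>b\<in>Poly_Mapping.keys G. Poly_Mapping.lookup G b * (\<Prod>i<M. x i ^ half_exp b i))"
  unfolding mp_eval_eq_hom_eval mp_hom_eval_def
proof (intro sum.cong refl arg_cong[where f="\<lambda>t. _ * t"])
  fix b assume b: "b \<in> Poly_Mapping.keys G"
  have "mon_eval (\<lambda>i. sqrt (x i)) b = (\<Prod>i<M. sqrt (x i) ^ Poly_Mapping.lookup b i)"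
    by (rule mon_eval_superset) (use keys_G[OF b] in auto)
  also have "\<dots> = (\<Prod>i<M. x i ^ half_exp b i)"
  proof (rule prod.cong[OF refl])
    fix i assume "i \<in> {..<M}"
    moreover have "Poly_Mapping.lookup b i = 2 * half_exp b i"
      using keys_G[OF b] by (simp add: half_exp_def)
    ultimately show "sqrt (x i) ^ Poly_Mapping.lookup b i = x i ^ half_exp b i"
      using assms by (simp add: power_mult)
  qed
  finally show "mon_eval (\<lambda>i. sqrt (x i)) b = (\<Prod>i<M. x i ^ half_exp b i)" .
qed

lemma polya_sum_scaled:
  assumes "t > 0"
  shows "polya_sum a = t ^ k * (\<Sum>b\<in>Poly_Mapping.keys G. Poly_Mapping.lookup G b
      * (\<Prod>i<M. \<Prod>j<half_exp b i. real (half_exp a i) / t - real j / t))"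
  unfolding polya_sum_def sum_distrib_left
proof (intro sum.cong refl)
  fix b assume b: "b \<in> Poly_Mapping.keys G"
  have "(\<Prod>i<M. falling_fact (half_exp a i) (half_exp b i))
      = t ^ (\<Sum>i<M. half_exp b i) * (\<Prod>i<M. \<Prod>j<half_exp b i. real (half_exp a i) / t - real j / t)"
    using assms by (simp add: falling_fact_scaled[of t] prod.distrib power_sum)
  then show "Poly_Mapping.lookup G b * (\<Prod>i<M. falling_fact (half_exp a i) (half_exp b i))
      = t ^ k * (Poly_Mapping.lookup G b
        * (\<Prod>i<M. \<Prod>j<half_exp b i. real (half_exp a i) / t - real j / t))"
    by (simp add: sum_half_exp_G[OF b])
qed

lemma polya_sum_nonneg:
  assumes a: "admissible N a" and N: "N \<ge> 1" and lam: "lam > 0"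
    and sphere: "\<And>u. (\<Sum>i<M. u i ^ 2) = 1 \<Longrightarrow> mp_eval u G \<ge> lam"
    and small: "real k ^ 2 * mp_l1_norm G \<le> real N * lam"
  shows "polya_sum a \<ge> 0"
proof -
  define t where "t = real (N + k)"
  define x where "x i = real (half_exp a i) / t" for i
  define A where "A b = (\<Prod>i<M. \<Prod>j<half_exp b i. x i - real j / t)" for b
  define B where "B b = (\<Prod>i<M. x i ^ half_exp b i)" for b
  have t: "t \<ge> 1" "real k \<le> t" using N by (auto simp: t_def)
  have x: "0 \<le> x i \<and> x i \<le> 1" if "i < M" for i
    using member_le_sum[of i "{..<M}" "half_exp a"] sum_half_exp_admissible[OF a] that t
    by (auto simp: x_def t_def field_simps)
  have "(\<Sum>i<M. x i) = 1"
    using sum_half_exp_admissible[OF a] t by (simp add: x_def t_def flip: sum_divide_distrib of_nat_sum)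
  then have "(\<Sum>i<M. sqrt (x i) ^ 2) = 1" using x by simp
  then have B_ge: "(\<Sum>b\<in>Poly_Mapping.keys G. Poly_Mapping.lookup G b * B b) \<ge> lam"
    using sphere mp_eval_G_sqrt[of x] x unfolding B_def by fastforce
  have "(\<Sum>b\<in>Poly_Mapping.keys G. Poly_Mapping.lookup G b * (B b - A b))
      \<le> (\<Sum>b\<in>Poly_Mapping.keys G. \<bar>Poly_Mapping.lookup G b\<bar> * (real k ^ 2 / t))"
  proof (rule sum_mono)
    fix b assume b: "b \<in> Poly_Mapping.keys G"
    have "Poly_Mapping.lookup G b * (B b - A b) \<le> \<bar>Poly_Mapping.lookup G b\<bar> * \<bar>A b - B b\<bar>"
      by (metis abs_ge_self abs_minus_commute abs_mult)
    also have "\<dots> \<le> \<bar>Poly_Mapping.lookup G b\<bar> * (real k ^ 2 / t)"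
      unfolding A_def B_def
      by (intro mult_left_mono abs_shifted_prod_diff_le[OF t x sum_half_exp_G[OF b]]) auto
    finally show "Poly_Mapping.lookup G b * (B b - A b) \<le> \<bar>Poly_Mapping.lookup G b\<bar> * (real k ^ 2 / t)" .
  qed
  also have "\<dots> = real k ^ 2 * mp_l1_norm G / t"
    by (simp add: mp_l1_norm_def sum_distrib_left sum_divide_distrib mult.commute)
  also have "\<dots> \<le> lam"
  proof -
    have "real N * lam \<le> t * lam" using lam by (intro mult_right_mono) (auto simp: t_def)
    with small t show ?thesis by (simp add: pos_divide_le_eq mult.commute)
  qed
  finally have "(\<Sum>b\<in>Poly_Mapping.keys G. Poly_Mapping.lookup G b * A b) \<ge> 0"
    using B_ge by (simp add: right_diff_distrib sum_subtractf)
  then show ?thesis using polya_sum_scaled[of t a] t by (simp add: A_def x_def)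
qed

theorem polya:
  assumes "N \<ge> 1" "lam > 0"
    and "\<And>u. (\<Sum>i<M. u i ^ 2) = 1 \<Longrightarrow> mp_eval u G \<ge> lam"
    and "real k ^ 2 * mp_l1_norm G \<le> real N * lam"
  shows "Poly_Mapping.lookup (mp_sum_sq M ^ N * G) a \<ge> 0"
  using polya_sum_nonneg[OF _ assms]
  by (auto simp: lookup_sum_sq_power_mult polya_coeff_def prod_pos intro!: divide_nonneg_pos)

end

section \<open>Positive forms and the cones \<open>Pol\<close>\<close>

lemma continuous_on_mp_eval: "continuous_on UNIV (\<lambda>z::nat \<Rightarrow> real. mp_eval z q)"
  unfolding mp_eval_def
  by (intro continuous_on_sum continuous_on_mult continuous_on_const continuous_on_prod
      continuous_on_power continuous_on_product_coordinates)

lemma compact_unit_sphere_prefix: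
  "compact {z::nat \<Rightarrow> real. (\<forall>i\<ge>N. z i = 0) \<and> (\<Sum>i<N. z i ^ 2) = 1}"
proof -
  define box where "box = (\<lambda>i::nat. if i < N then {-1..1::real} else {0})"
  have "compactin (product_topology (\<lambda>i. euclidean) UNIV) (PiE UNIV box)"
    by (subst compactin_PiE) (auto simp: compactin_euclidean_iff box_def)
  then have "compact {z. \<forall>i. z i \<in> box i}"
    by (simp add: euclidean_product_topology compactin_euclidean_iff PiE_def Pi_def)
  moreover have "closed {z::nat \<Rightarrow> real. (\<Sum>i<N. z i ^ 2) = 1}"
    by (intro closed_Collect_eq continuous_on_sum continuous_on_power
        continuous_on_product_coordinates continuous_on_const)
  ultimately have "compact ({z. \<forall>i. z i \<in> box i} \<inter> {z. (\<Sum>i<N. z i ^ 2) = 1})"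
    by (rule compact_Int_closed)
  moreover have "{z. \<forall>i. z i \<in> box i} \<inter> {z. (\<Sum>i<N. z i ^ 2) = 1}
      = {z. (\<forall>i\<ge>N. z i = 0) \<and> (\<Sum>i<N. z i ^ 2) = 1}"
  proof -
    have "\<bar>z i\<bar> \<le> 1" if "(\<Sum>i<N. z i ^ 2) = 1" "i < N" for z :: "nat \<Rightarrow> real" and i
      using member_le_sum[of i "{..<N}" "\<lambda>i. z i ^ 2"] that abs_le_square_iff[of "z i" 1] by simp
    then show ?thesis by (auto simp: box_def abs_le_iff not_less)
  qed
  ultimately show ?thesis by simp
qed

lemma mp_form_ge_norm_power:
  assumes f: "mp_form_in (2*e) {..<N} f" and e: "e \<ge> 1"
    and sphere: "\<And>z. (\<forall>i\<ge>N. z i = 0) \<Longrightarrow> (\<Sum>i<N. z i ^ 2) = 1 \<Longrightarrow> mp_eval z f \<ge> \<epsilon>"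
  shows "mp_eval z f \<ge> \<epsilon> * (\<Sum>i<N. z i ^ 2) ^ e"
proof -
  define s where "s = (\<Sum>i<N. z i ^ 2)"
  define z0 where "z0 i = (if i < N then z i else 0)" for i
  have fz: "mp_eval z f = mp_eval z0 f"
    by (rule mp_eval_cong[OF mp_form_in_vars[OF f]]) (simp add: z0_def)
  show ?thesis
  proof (cases "s = 0")
    case True
    then have "z0 = (\<lambda>i. 0 * z0 i)"
      by (auto simp: fun_eq_iff s_def z0_def sum_nonneg_eq_0_iff)
    then have "mp_eval z0 f = 0 ^ (2*e) * mp_eval z0 f"
      using mp_eval_form_scale[OF f, of 0 z0] by metis
    then have "mp_eval z0 f = 0" using e by (simp add: power_0_left)
    with True fz e show ?thesis by (simp add: s_def power_0_left)
  next
    case False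
    then have s: "s > 0" unfolding s_def by (metis sum_nonneg zero_le_power2 order_le_neq_trans)
    define c where "c = 1 / sqrt s"
    have "(\<Sum>i<N. (c * z0 i) ^ 2) = c ^ 2 * s"
      by (simp add: s_def z0_def power_mult_distrib sum_distrib_left)
    also have "\<dots> = 1" using s by (simp add: c_def power_divide)
    finally have "\<epsilon> \<le> mp_eval (\<lambda>i. c * z0 i) f" by (intro sphere) (auto simp: z0_def)
    also have "\<dots> = c ^ (2*e) * mp_eval z f"
      by (simp only: mp_eval_form_scale[OF f] fz)
    also have "c ^ (2*e) = 1 / s ^ e"
      using s by (simp add: c_def power_mult power_divide)
    finally show ?thesis using s by (simp add: s_def field_simps)
  qed
qed

lemma positive_form_ge_norm_power:
  assumes f: "mp_form_in (2*e) {..<N} f" and e: "e \<ge> 1" and N: "N \<ge> 1"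
    and pos: "\<And>z. (\<Sum>i<N. z i ^ 2) > 0 \<Longrightarrow> mp_eval z f > 0"
  shows "\<exists>\<epsilon>>0. \<forall>z. mp_eval z f \<ge> \<epsilon> * (\<Sum>i<N. z i ^ 2) ^ e"
proof -
  define K where "K = {z::nat \<Rightarrow> real. (\<forall>i\<ge>N. z i = 0) \<and> (\<Sum>i<N. z i ^ 2) = 1}"
  define e0 :: "nat \<Rightarrow> real" where "e0 i = (if i = 0 then 1 else 0)" for i
  have "(\<Sum>i<N. e0 i ^ 2) = (\<Sum>i<N. if i = 0 then 1 else 0)"
    by (intro sum.cong) (auto simp: e0_def)
  with N have "e0 \<in> K" by (simp add: K_def e0_def)
  then have "\<exists>z0\<in>K. \<forall>z\<in>K. mp_eval z0 f \<le> mp_eval z f"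
    unfolding K_def
    by (intro continuous_attains_inf compact_unit_sphere_prefix
        continuous_on_subset[OF continuous_on_mp_eval subset_UNIV]) blast
  then obtain z0 where z0: "z0 \<in> K" and min: "\<And>z. z \<in> K \<Longrightarrow> mp_eval z0 f \<le> mp_eval z f"
    by blast
  have "mp_eval z0 f > 0" using z0 by (intro pos) (simp add: K_def)
  moreover have "mp_eval z f \<ge> mp_eval z0 f * (\<Sum>i<N. z i ^ 2) ^ e" for z
    by (rule mp_form_ge_norm_power[OF f e]) (simp add: min K_def)
  ultimately show ?thesis by blast
qed

lemma Pol_eval_ge:
  assumes q: "q \<in> Pol r N e" and z: "\<exists>i<N. z i \<noteq> 0"
  shows "mp_eval z q + (\<Sum>i<N. z i ^ 2) ^ e / (2 * real r) \<ge> 0"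
proof -
  define u where "u i = (if i < N then sqrt (max (z i) 0) else sqrt (max (- z (i - N)) 0))" for i
  have u_sq: "u i ^ 2 - u (N + i) ^ 2 = z i" if "i < N" for i
    using that by (auto simp: u_def max_def)
  have u_4: "u i ^ 4 + u (N + i) ^ 4 = z i ^ 2" if "i < N" for i
  proof -
    have "u i ^ 4 = (max (z i) 0) ^ 2" "u (N + i) ^ 4 = (max (- z i) 0) ^ 2"
      using that by (simp_all add: u_def power4_eq_xxxx power2_eq_square flip: real_sqrt_mult)
    then show ?thesis by (auto simp: max_def power2_eq_square)
  qed
  have "(\<Sum>i<N. u i ^ 2 + u (N + i) ^ 2) = (\<Sum>i<N. \<bar>z i\<bar>)"
    by (intro sum.cong refl) (auto simp: u_def max_def)
  also have "\<dots> > 0" using z by (metis abs_ge_zero finite_lessThan lessThan_iff sum_pos2 zero_less_abs_iff)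
  finally have pos: "(\<Sum>i<N. u i ^ 2 + u (N + i) ^ 2) ^ (r ^ 2) > 0" by simp
  define P where "P = (mp_subst (\<lambda>i. mp_var i ^ 2 - mp_var (N + i) ^ 2) q
      + mp_const (1 / (2 * real r)) * (\<Sum>i<N. mp_var i ^ 4 + mp_var (N + i) ^ 4) ^ e)
      * (\<Sum>i<N. mp_var i ^ 2 + mp_var (N + i) ^ 2) ^ (r ^ 2)"
  have "\<forall>a. mp_coeff P a \<ge> 0" using q unfolding Pol_def P_def Let_def by blast
  then have "mp_eval u P \<ge> 0" by (intro mp_eval_nonneg) (auto simp: mp_coeff_def u_def)
  moreover have "mp_eval (\<lambda>i. u i ^ 2 - u (N + i) ^ 2) q = mp_eval z q"
    using q by (intro mp_eval_cong[of q "{..<N}"]) (auto simp: Pol_def u_sq)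
  ultimately have "(mp_eval z q + 1 / (2 * real r) * (\<Sum>i<N. z i ^ 2) ^ e)
      * (\<Sum>i<N. u i ^ 2 + u (N + i) ^ 2) ^ (r ^ 2) \<ge> 0"
    by (simp add: P_def mp_eval_subst u_4)
  with pos have "mp_eval z q + 1 / (2 * real r) * (\<Sum>i<N. z i ^ 2) ^ e \<ge> 0"
    by (simp add: zero_le_mult_iff)
  then show ?thesis by simp
qed

lemma sum_lessThan_double:
  fixes f :: "nat \<Rightarrow> 'a::comm_monoid_add"
  shows "(\<Sum>i<N. f i + f (N + i)) = (\<Sum>j<2*N. f j)"
proof -
  have "(\<Sum>j<N + M. f j) = (\<Sum>j<N. f j) + (\<Sum>i<M. f (N + i))" for M
    by (induction M) (simp_all add: add.assoc)
  then show ?thesis by (simp add: sum.distrib mult_2)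
qed

lemma sum_power4_ge:
  fixes u :: "nat \<Rightarrow> real"
  assumes "(\<Sum>j<2*N. u j ^ 2) = 1"
  shows "(\<Sum>i<N. u i ^ 4 + u (N + i) ^ 4) \<ge> 1 / real (2*N)"
proof -
  have "(\<Sum>j<2*N. u j ^ 2) ^ 2 \<le> (\<Sum>j<2*N. (u j ^ 2) ^ 2) * real (card {..<2*N})"
    by (rule sum_squared_le_sum_of_squares)
  with assms have "1 \<le> (\<Sum>i<N. u i ^ 4 + u (N + i) ^ 4) * real (2*N)"
    by (simp add: sum_lessThan_double[of "\<lambda>j. u j ^ 4"] flip: power_mult)
  moreover have "N \<noteq> 0" using assms by (cases "N = 0") auto
  ultimately show ?thesis by (simp add: divide_simps)
qed

text \<open>Substituting \<open>v\<^sub>i\<^sup>2 - w\<^sub>i\<^sup>2\<close> turns a nonnegative form into an even form that is strictly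
  positive on the unit sphere once the perturbation \<open>(\<Sum> v\<^sub>i\<^sup>4 + w\<^sub>i\<^sup>4)\<^sup>e / (2r)\<close> is added, so
  Polya's theorem applies with exponent \<open>r\<^sup>2\<close> as soon as \<open>r\<close> dominates the \<open>\<ell>\<^sub>1\<close>-norm of the
  result.\<close>

lemma Pol_member_of_polya_bound:
  fixes q :: mpoly and r N e :: nat
  defines "G \<equiv> mp_subst (\<lambda>i. mp_var i ^ 2 - mp_var (N + i) ^ 2) q
      + mp_const (1 / (2 * real r)) * (\<Sum>i<N. mp_var i ^ 4 + mp_var (N + i) ^ 4) ^ e"
  assumes q: "mp_form_in (2*e) {..<N} q" and q_nonneg: "\<And>z. mp_eval z q \<ge> 0"
    and N: "N \<ge> 1" and r: "r \<ge> 1"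
    and bound: "real (2*e) ^ 2 * mp_l1_norm G \<le> real r * (1 / real (2*N)) ^ e / 2"
  shows "q \<in> Pol r N e"
proof -
  define \<sigma> where "\<sigma> = (\<lambda>i. mp_var i ^ 2 - mp_var (N + i) ^ 2)"
  define lam where "lam = (1 / real (2*N)) ^ e / (2 * real r)"
  have lam: "lam > 0" using N r by (simp add: lam_def)
  have "mp_form_in (2 * (2*e)) {..<2*N} (mp_subst \<sigma> q)"
    by (rule mp_form_in_subst[OF q]) (auto simp: \<sigma>_def intro!: mp_form_in_diff mp_form_in_var_power)
  moreover have "mp_form_in 4 {..<2*N} (\<Sum>i<N. mp_var i ^ 4 + mp_var (N + i) ^ 4)"
    by (intro mp_form_in_sum mp_form_in_add mp_form_in_var_power) auto
  then have "mp_form_in (2 * (2*e)) {..<2*N} ((\<Sum>i<N. mp_var i ^ 4 + mp_var (N + i) ^ 4) ^ e)"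
    using mp_form_in_power by fastforce
  ultimately have "mp_form_in (2 * (2*e)) {..<2*N} G"
    by (auto simp: G_def \<sigma>_def intro!: mp_form_in_add mp_form_in_const_mult)
  moreover have "mp_even_exps G"
    unfolding G_def
    by (intro mp_even_exps_add mp_even_exps_subst mp_even_exps_diff mp_even_exps_mult
        mp_even_exps_power mp_even_exps_sum mp_even_exps_var_power mp_even_exps_const) auto
  ultimately interpret polya_form G "2*N" "2*e"
    by unfold_locales
  have "mp_eval u G \<ge> lam" if u: "(\<Sum>i<2*N. u i ^ 2) = 1" for u
  proof -
    have "lam \<le> (\<Sum>i<N. u i ^ 4 + u (N + i) ^ 4) ^ e / (2 * real r)"
      unfolding lam_def using r by (intro divide_right_mono power_mono sum_power4_ge[OF u]) auto
    moreover have "mp_eval (\<lambda>i. u i ^ 2 - u (N + i) ^ 2) q \<ge> 0" by (rule q_nonneg)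
    ultimately show ?thesis by (simp add: G_def mp_eval_subst)
  qed
  moreover have "real (2*e) ^ 2 * mp_l1_norm G \<le> real (r ^ 2) * lam"
    using bound r by (simp add: lam_def power2_eq_square field_simps)
  ultimately have "Poly_Mapping.lookup (mp_sum_sq (2*N) ^ (r ^ 2) * G) a \<ge> 0" for a
    using r lam by (intro polya) (auto simp: one_le_power)
  moreover have "mp_sum_sq (2*N) = (\<Sum>i<N. mp_var i ^ 2 + mp_var (N + i) ^ 2)"
    unfolding mp_sum_sq_def by (rule sum_lessThan_double[symmetric])
  ultimately show ?thesis
    using q by (simp add: Pol_def G_def mp_coeff_def mp_form_in_homogeneous mp_form_in_vars mult.commute)
qed

lemma mp_l1_norm_perturbation_le:
  assumes "r \<ge> 1"
  shows "mp_l1_norm (mp_subst \<sigma> (f - mp_const (1 / real r) * X) + mp_const (1 / (2 * real r)) * Y)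
    \<le> mp_l1_norm (mp_subst \<sigma> f) + mp_l1_norm (mp_subst \<sigma> X) + mp_l1_norm Y"
proof -
  have "mp_l1_norm (mp_subst \<sigma> (f - mp_const (1 / real r) * X) + mp_const (1 / (2 * real r)) * Y)
      \<le> mp_l1_norm (mp_subst \<sigma> f - mp_const (1 / real r) * mp_subst \<sigma> X)
        + mp_l1_norm (mp_const (1 / (2 * real r)) * Y)"
    by (simp add: mp_l1_norm_add)
  also have "\<dots> \<le> mp_l1_norm (mp_subst \<sigma> f) + 1 / real r * mp_l1_norm (mp_subst \<sigma> X)
        + 1 / (2 * real r) * mp_l1_norm Y"
    using mp_l1_norm_diff[of "mp_subst \<sigma> f" "mp_const (1 / real r) * mp_subst \<sigma> X"]
    by (simp add: mp_l1_norm_const_mult)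
  also have "\<dots> \<le> mp_l1_norm (mp_subst \<sigma> f) + mp_l1_norm (mp_subst \<sigma> X) + mp_l1_norm Y"
  proof -
    have "1 / real r * mp_l1_norm (mp_subst \<sigma> X) \<le> mp_l1_norm (mp_subst \<sigma> X)"
      "1 / (2 * real r) * mp_l1_norm Y \<le> mp_l1_norm Y"
      using assms mp_l1_norm_nonneg[of "mp_subst \<sigma> X"] mp_l1_norm_nonneg[of Y]
      by (simp_all add: divide_le_eq mult_le_cancel_left1 mult_le_cancel_left2)
    then show ?thesis by simp
  qed
  finally show ?thesis .
qed

lemma eventually_Pol_member:
  assumes f: "mp_form_in (2*e) {..<N} f" and N: "N \<ge> 1" and eps: "\<epsilon> > 0"
    and f_ge: "\<And>z. mp_eval z f \<ge> \<epsilon> * (\<Sum>i<N. z i ^ 2) ^ e"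
  shows "\<exists>R0. \<forall>r\<ge>R0. f - mp_const (1 / real r) * (\<Sum>i<N. mp_var i ^ 2) ^ e \<in> Pol r N e"
proof -
  define \<sigma> where "\<sigma> = (\<lambda>i. mp_var i ^ 2 - mp_var (N + i) ^ 2)"
  define X where "X = (\<Sum>i<N. mp_var i ^ 2) ^ e"
  define Y where "Y = (\<Sum>i<N. mp_var i ^ 4 + mp_var (N + i) ^ 4) ^ e"
  define C where "C = mp_l1_norm (mp_subst \<sigma> f) + mp_l1_norm (mp_subst \<sigma> X) + mp_l1_norm Y"
  define c where "c = (1 / real (2*N)) ^ e"
  have c: "c > 0" using N by (simp add: c_def)
  define R0 where "R0 = nat \<lceil>max 1 (max (1 / \<epsilon>) (2 * real (2*e) ^ 2 * C / c))\<rceil>"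
  have "f - mp_const (1 / real r) * X \<in> Pol r N e" if "r \<ge> R0" for r
  proof (rule Pol_member_of_polya_bound)
    have r: "real r \<ge> 1" "real r \<ge> 1 / \<epsilon>" "real r \<ge> 2 * real (2*e) ^ 2 * C / c"
      using that unfolding R0_def by linarith+
    then show "r \<ge> 1" by simp
    have "mp_form_in 2 {..<N} (\<Sum>i<N. mp_var i ^ 2)"
      by (intro mp_form_in_sum mp_form_in_var_power) auto
    then have "mp_form_in (2*e) {..<N} X"
      unfolding X_def by (rule mp_form_in_power)
    then show "mp_form_in (2*e) {..<N} (f - mp_const (1 / real r) * X)"
      by (intro mp_form_in_diff f mp_form_in_const_mult)
    show "mp_eval z (f - mp_const (1 / real r) * X) \<ge> 0" for z
    proof -
      have "1 / real r \<le> \<epsilon>" using r eps by (simp add: divide_simps mult.commute)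
      then have "1 / real r * (\<Sum>i<N. z i ^ 2) ^ e \<le> \<epsilon> * (\<Sum>i<N. z i ^ 2) ^ e"
        by (intro mult_right_mono zero_le_power[OF sum_nonneg]) simp_all
      with f_ge[of z] show ?thesis by (simp add: X_def)
    qed
    have "real (2*e) ^ 2 * mp_l1_norm (mp_subst \<sigma> (f - mp_const (1 / real r) * X)
        + mp_const (1 / (2 * real r)) * Y) \<le> real (2*e) ^ 2 * C"
      unfolding C_def using \<open>r \<ge> 1\<close> by (intro mult_left_mono mp_l1_norm_perturbation_le) auto
    also have "\<dots> \<le> real r * c / 2" using r(3) c by (simp add: field_simps)
    finally show "real (2*e) ^ 2 * mp_l1_norm (mp_subst (\<lambda>i. mp_var i ^ 2 - mp_var (N + i) ^ 2)
        (f - mp_const (1 / real r) * X) + mp_const (1 / (2 * real r))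
        * (\<Sum>i<N. mp_var i ^ 4 + mp_var (N + i) ^ 4) ^ e) \<le> real r * (1 / real (2*N)) ^ e / 2"
      by (simp add: \<sigma>_def Y_def c_def)
  qed (use N in auto)
  then show ?thesis unfolding X_def by blast
qed

section \<open>The forms \<open>f\<^sub>\<gamma>\<close>\<close>

locale compact_pop =
  fixes n m d :: nat and p :: mpoly and g :: "nat \<Rightarrow> mpoly"
    and R \<beta> :: real and \<eta> :: "nat \<Rightarrow> real"
    and S :: "(nat \<Rightarrow> real) set" and pstar :: ereal
  assumes vars: "mp_vars p \<subseteq> {..<n}" "\<And>i. i \<in> {1..m} \<Longrightarrow> mp_vars (g i) \<subseteq> {..<n}"
    and d_def: "d = max 1 ((Max (insert (mp_deg p) ((\<lambda>i. mp_deg (g i)) ` {1..m})) + 1) div 2)"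
    and S_def: "S = {x. (\<forall>i\<ge>n. x i = 0) \<and> (\<forall>i\<in>{1..m}. mp_eval x (g i) \<ge> 0)}"
    and pstar_def: "pstar = Inf ((\<lambda>x. ereal (mp_eval x p)) ` S)"
    and R_bound: "\<And>x. x \<in> S \<Longrightarrow> (\<Sum>i<n. x i ^ 2) \<le> R"
    and eta_bound: "\<And>i x. i \<in> {1..m} \<Longrightarrow> x \<in> S \<Longrightarrow> mp_eval x (g i) \<le> \<eta> i"
    and beta_bound: "\<And>x. x \<in> S \<Longrightarrow> - mp_eval x p \<le> \<beta>"
begin

abbreviation "F \<gamma> \<equiv> f_gamma n m d p g R \<eta> \<beta> \<gamma>"
abbreviation "hom q \<equiv> mp_homogenize (2*d) (n + m + 2) q"
abbreviation "radius \<gamma> \<equiv> R + (\<Sum>i=1..m. \<eta> i) + \<beta> + \<gamma>"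

lemma d_ge_1: "d \<ge> 1"
  using d_def by simp

lemma deg_p: "mp_deg p \<le> 2*d" and deg_g: "i \<in> {1..m} \<Longrightarrow> mp_deg (g i) \<le> 2*d"
proof -
  define D where "D = Max (insert (mp_deg p) ((\<lambda>i. mp_deg (g i)) ` {1..m}))"
  have "D \<le> 2 * ((D + 1) div 2)" by presburger
  also have "\<dots> \<le> 2*d" using d_def by (simp add: D_def)
  finally have "D \<le> 2*d" .
  then show "mp_deg p \<le> 2*d" "i \<in> {1..m} \<Longrightarrow> mp_deg (g i) \<le> 2*d"
    unfolding D_def by (auto dest: order.trans[rotated])
qed

lemma mp_eval_F:
  "mp_eval z (F \<gamma>) =
     (\<gamma> * z (n+m+2) ^ (2*d) - mp_eval z (hom p) - z n ^ 2 * z (n+m+2) ^ (2*d - 2)) ^ 2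
     + (\<Sum>i=1..m. (mp_eval z (hom (g i)) - z (n+i) ^ 2 * z (n+m+2) ^ (2*d - 2)) ^ 2)
     + (radius \<gamma> ^ d * z (n+m+2) ^ (2*d) - ((\<Sum>i<n. z i ^ 2) + (\<Sum>j=0..m. z (n+j) ^ 2)) ^ d
        - z (n+m+1) ^ (2*d)) ^ 2"
  by (simp add: f_gamma_def Let_def add.assoc)

lemma mp_eval_hom:
  assumes "z (n+m+2) \<noteq> 0"
  shows "mp_eval z (hom p) = z (n+m+2) ^ (2*d) * mp_eval (\<lambda>i. if i < n then z i / z (n+m+2) else 0) p"
    and "i \<in> {1..m} \<Longrightarrow>
      mp_eval z (hom (g i)) = z (n+m+2) ^ (2*d) * mp_eval (\<lambda>i. if i < n then z i / z (n+m+2) else 0) (g i)"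
  by (rule mp_eval_homogenize; use assms vars deg_p deg_g in simp)+

lemma F_zero_imp_y_nonzero:
  assumes F0: "mp_eval z (F \<gamma>) = 0" and z: "(\<Sum>i<n+m+3. z i ^ 2) > 0"
  shows "z (n+m+2) \<noteq> 0"
proof
  assume y: "z (n+m+2) = 0"
  define A where "A = (\<Sum>i<n. z i ^ 2) + (\<Sum>j=0..m. z (n+j) ^ 2)"
  have "radius \<gamma> ^ d * z (n+m+2) ^ (2*d) - A ^ d - z (n+m+1) ^ (2*d) = 0"
    using F0 unfolding mp_eval_F A_def[symmetric] by (simp add: add_nonneg_eq_0_iff sum_nonneg)
  then have "A ^ d + z (n+m+1) ^ (2*d) = 0"
    using y d_ge_1 by (simp add: power_0_left)
  moreover have "A \<ge> 0" unfolding A_def by (intro add_nonneg_nonneg sum_nonneg) auto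
  ultimately have "A = 0" "z (n+m+1) = 0"
    using d_ge_1 by (simp_all add: add_nonneg_eq_0_iff power_mult)
  then have "(\<Sum>i<n. z i ^ 2) = 0" "(\<Sum>j=0..m. z (n+j) ^ 2) = 0"
    unfolding A_def by (simp_all add: add_nonneg_eq_0_iff sum_nonneg)
  then have "z i = 0" if "i < n+m+3" for i
  proof -
    consider "i < n" | "n \<le> i" "i \<le> n+m" | "i = n+m+1" | "i = n+m+2"
      using \<open>i < n+m+3\<close> by linarith
    then show ?thesis
    proof cases
      case 2
      have "\<forall>j\<in>{0..m}. z (n + j) = 0"
        using \<open>(\<Sum>j=0..m. z (n+j) ^ 2) = 0\<close> by (simp add: sum_nonneg_eq_0_iff)
      moreover have "i - n \<in> {0..m}" using 2 by auto
      ultimately have "z (n + (i - n)) = 0" by blast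
      with 2 show ?thesis by simp
    qed (use \<open>(\<Sum>i<n. z i ^ 2) = 0\<close> \<open>z (n+m+1) = 0\<close> y in \<open>auto simp: sum_nonneg_eq_0_iff\<close>)
  qed
  with z show False by simp
qed

lemma F_zero_imp_feasible:
  assumes F0: "mp_eval z (F \<gamma>) = 0" and y: "z (n+m+2) \<noteq> 0"
  defines "x \<equiv> \<lambda>i. if i < n then z i / z (n+m+2) else 0"
  shows "x \<in> S" and "mp_eval x p \<le> \<gamma>"
proof -
  let ?Y = "z (n+m+2)"
  have Y: "?Y ^ (2*d) > 0" "?Y ^ (2*d - 2) > 0"
    using y by (simp_all add: power_mult zero_less_power_eq)
  have terms: "\<gamma> * ?Y ^ (2*d) - mp_eval z (hom p) - z n ^ 2 * ?Y ^ (2*d - 2) = 0"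
    "\<And>i. i \<in> {1..m} \<Longrightarrow> mp_eval z (hom (g i)) = z (n+i) ^ 2 * ?Y ^ (2*d - 2)"
    using F0 unfolding mp_eval_F by (simp_all add: add_nonneg_eq_0_iff sum_nonneg sum_nonneg_eq_0_iff)
  have "mp_eval x (g i) \<ge> 0" if i: "i \<in> {1..m}" for i
  proof -
    have "?Y ^ (2*d) * mp_eval x (g i) = z (n+i) ^ 2 * ?Y ^ (2*d - 2)"
      using terms(2)[OF i] mp_eval_hom(2)[of z, OF y i] by (simp add: x_def)
    with Y show ?thesis by (metis zero_le_mult_iff zero_le_power2 not_le less_imp_le)
  qed
  then show "x \<in> S" by (simp add: S_def x_def)
  have "?Y ^ (2*d) * (\<gamma> - mp_eval x p) = z n ^ 2 * ?Y ^ (2*d - 2)"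
    using terms(1) mp_eval_hom(1)[of z, OF y] by (simp add: x_def algebra_simps)
  with Y show "mp_eval x p \<le> \<gamma>" by (smt (verit) mult_pos_neg zero_le_mult_iff zero_le_power2)
qed

lemma F_pos:
  assumes "ereal \<gamma> < pstar" and "(\<Sum>i<n+m+3. z i ^ 2) > 0"
  shows "mp_eval z (F \<gamma>) > 0"
proof (rule ccontr)
  assume "\<not> mp_eval z (F \<gamma>) > 0"
  moreover have "mp_eval z (F \<gamma>) \<ge> 0" unfolding mp_eval_F by (intro add_nonneg_nonneg sum_nonneg) auto
  ultimately have F0: "mp_eval z (F \<gamma>) = 0" by simp
  define x where "x = (\<lambda>i. if i < n then z i / z (n+m+2) else 0)"
  have y: "z (n+m+2) \<noteq> 0" by (rule F_zero_imp_y_nonzero[OF F0 assms(2)])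
  have "pstar \<le> ereal (mp_eval x p)"
    unfolding pstar_def using F_zero_imp_feasible(1)[OF F0 y] by (intro Inf_lower) (auto simp: x_def)
  also have "\<dots> \<le> ereal \<gamma>" using F_zero_imp_feasible(2)[OF F0 y] by (simp add: x_def)
  finally show False using assms(1) by simp
qed

lemma F_zero_at_feasible:
  assumes x: "x \<in> S" and lt: "mp_eval x p < \<gamma>"
  shows "\<exists>z. z (n+m+2) = 1 \<and> mp_eval z (F \<gamma>) = 0"
proof -
  have x0: "\<forall>i\<ge>n. x i = 0" and gx: "\<And>i. i \<in> {1..m} \<Longrightarrow> mp_eval x (g i) \<ge> 0"
    using x by (auto simp: S_def)
  define A where "A = (\<Sum>i<n. x i ^ 2) + (\<gamma> - mp_eval x p) + (\<Sum>j=1..m. mp_eval x (g j))"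
  define s where "s = root (2*d) (radius \<gamma> ^ d - A ^ d)"
  define z where "z i = (if i < n then x i else if i = n then sqrt (\<gamma> - mp_eval x p)
      else if i \<le> n + m then sqrt (mp_eval x (g (i - n))) else if i = n+m+1 then s
      else if i = n+m+2 then 1 else 0)" for i
  have "A \<ge> 0" unfolding A_def using lt gx by (intro add_nonneg_nonneg sum_nonneg) auto
  moreover have "A \<le> radius \<gamma>"
    using sum_mono[of "{1..m}" "\<lambda>j. mp_eval x (g j)" \<eta>] eta_bound[OF _ x] R_bound[OF x] beta_bound[OF x]
    unfolding A_def by force
  ultimately have s: "s ^ (2*d) = radius \<gamma> ^ d - A ^ d"
    unfolding s_def using d_ge_1 by (intro real_root_pow_pos2) (auto intro: power_mono)
  have "(\<lambda>i. if i < n then z i / z (n+m+2) else 0) = x"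
    using x0 by (auto simp: z_def fun_eq_iff)
  then have hom_eq: "mp_eval z (hom p) = mp_eval x p"
    "\<And>i. i \<in> {1..m} \<Longrightarrow> mp_eval z (hom (g i)) = mp_eval x (g i)"
    using mp_eval_hom[of z] by (simp_all add: z_def)
  have z_g: "z (n+i) ^ 2 = mp_eval x (g i)" if "i \<in> {1..m}" for i
    using that gx[OF that] by (simp add: z_def)
  have z_n: "z n ^ 2 = \<gamma> - mp_eval x p" using lt by (simp add: z_def)
  have z_y: "z (n+m+2) = 1" by (simp add: z_def)
  have "(\<Sum>j=0..m. z (n+j) ^ 2) = z n ^ 2 + (\<Sum>j=Suc 0..m. z (n+j) ^ 2)"
    by (simp add: sum.atLeast_Suc_atMost)
  also have "(\<Sum>j=Suc 0..m. z (n+j) ^ 2) = (\<Sum>j=1..m. mp_eval x (g j))"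
    by (rule sum.cong) (simp_all add: z_g)
  finally have ball: "(\<Sum>i<n. z i ^ 2) + (\<Sum>j=0..m. z (n+j) ^ 2) = A"
    unfolding A_def z_n by (simp add: z_def)
  have z_s: "z (n+m+1) = s" by (simp add: z_def)
  have g_terms: "(\<Sum>i=1..m. (mp_eval z (hom (g i)) - z (n+i) ^ 2 * z (n+m+2) ^ (2*d - 2)) ^ 2) = 0"
  proof (intro sum.neutral ballI)
    fix i assume i: "i \<in> {1..m}"
    show "(mp_eval z (hom (g i)) - z (n+i) ^ 2 * z (n+m+2) ^ (2*d - 2)) ^ 2 = 0"
      unfolding hom_eq(2)[OF i] z_g[OF i] z_y by simp
  qed
  have "mp_eval z (F \<gamma>) = 0"
    unfolding mp_eval_F g_terms ball unfolding hom_eq(1) z_y z_n z_s s by simp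
  then show ?thesis by (intro exI[of _ z]) (simp add: z_def)
qed

lemma mp_form_in_F: "mp_form_in (2*(2*d)) {..<n+m+3} (F \<gamma>)"
proof -
  let ?V = "{..<n+m+3}"
  have y: "mp_form_in j ?V (mp_var (n+m+2) ^ j)" for j by (rule mp_form_in_var_power) simp
  have s: "j \<le> m + 1 \<Longrightarrow> mp_form_in e ?V (mp_var (n+j) ^ e)" for j e
    by (rule mp_form_in_var_power) simp
  have sy: "mp_form_in (2*d) ?V (mp_var (n+j) ^ 2 * mp_var (n+m+2) ^ (2*d - 2))"
    if "j \<le> m + 1" for j
  proof -
    have "mp_form_in (2 + (2*d - 2)) ?V (mp_var (n+j) ^ 2 * mp_var (n+m+2) ^ (2*d - 2))"
      by (intro mp_form_in_mult s y that)
    moreover have "2 + (2*d - 2) = 2*d" using d_ge_1 by simp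
    ultimately show ?thesis by simp
  qed
  have hom_p: "mp_form_in (2*d) ?V (hom p)"
    using vars deg_p by (intro mp_form_in_homogenize) auto
  have hom_g: "mp_form_in (2*d) ?V (hom (g i))" if "i \<in> {1..m}" for i
    using vars(2)[OF that] deg_g[OF that] by (intro mp_form_in_homogenize) auto
  have "mp_form_in 2 ?V ((\<Sum>i<n. mp_var i ^ 2) + (\<Sum>j=0..m. mp_var (n+j) ^ 2))"
    by (intro mp_form_in_add mp_form_in_sum mp_form_in_var_power) auto
  then have ball: "mp_form_in (2*d) ?V (((\<Sum>i<n. mp_var i ^ 2) + (\<Sum>j=0..m. mp_var (n+j) ^ 2)) ^ d)"
    by (rule mp_form_in_power)
  have sq: "mp_form_in (2*d) ?V t \<Longrightarrow> mp_form_in (2*(2*d)) ?V (t ^ 2)" for t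
    using mp_form_in_power[of "2*d" ?V t 2] by (simp add: mult.commute)
  show ?thesis unfolding f_gamma_def Let_def
    by (intro mp_form_in_add mp_form_in_diff mp_form_in_sum mp_form_in_const_mult sq y s sy
        hom_p hom_g ball) auto
qed

lemma Pol_member_imp_le_pstar:
  assumes r: "r \<ge> 1"
    and q: "F \<gamma> - mp_const (1 / real r) * (\<Sum>i<n+m+3. mp_var i ^ 2) ^ (2*d) \<in> Pol r (n+m+3) (2*d)"
  shows "ereal \<gamma> \<le> pstar"
proof (rule ccontr)
  assume "\<not> ereal \<gamma> \<le> pstar"
  then obtain x where "x \<in> S" "mp_eval x p < \<gamma>"
    unfolding pstar_def by (auto simp: Inf_less_iff not_le)
  then obtain z where z: "z (n+m+2) = 1" and F0: "mp_eval z (F \<gamma>) = 0"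
    using F_zero_at_feasible by blast
  define s where "s = (\<Sum>i<n+m+3. z i ^ 2)"
  have "1 \<le> s"
    using member_le_sum[of "n+m+2" "{..<n+m+3}" "\<lambda>i. z i ^ 2"] z by (simp add: s_def)
  moreover have "s ^ (2*d) / (2 * real r) - s ^ (2*d) / real r \<ge> 0"
  proof -
    have "\<exists>i<n+m+3. z i \<noteq> 0" using z by (intro exI[of _ "n+m+2"]) simp
    then show ?thesis using Pol_eval_ge[OF q, of z] F0 by (simp add: s_def)
  qed
  ultimately show False
    using r by (simp add: field_simps) (smt (verit) one_le_power)
qed

lemma eventually_Pol_member_F:
  assumes "ereal \<gamma> < pstar"
  shows "\<exists>R0. \<forall>r\<ge>R0.
    F \<gamma> - mp_const (1 / real r) * (\<Sum>i<n+m+3. mp_var i ^ 2) ^ (2*d) \<in> Pol r (n+m+3) (2*d)"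
proof -
  obtain \<epsilon> where "\<epsilon> > 0" "\<And>z. mp_eval z (F \<gamma>) \<ge> \<epsilon> * (\<Sum>i<n+m+3. z i ^ 2) ^ (2*d)"
    using positive_form_ge_norm_power[OF mp_form_in_F _ _ F_pos[OF assms]] d_ge_1 by fastforce
  then show ?thesis by (intro eventually_Pol_member[OF mp_form_in_F]) auto
qed

end

lemma running_Max_tendsto:
  fixes l :: "nat \<Rightarrow> ereal"
  assumes le: "\<And>r. r \<ge> 1 \<Longrightarrow> l r \<le> L"
    and approx: "\<And>\<gamma>. ereal \<gamma> < L \<Longrightarrow> \<exists>R0. \<forall>r\<ge>R0. ereal \<gamma> \<le> l r"
  shows "(\<lambda>r. Max (l ` {1..r})) \<longlonglongrightarrow> L"
proof (rule order_tendstoI)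
  fix a assume "a < L"
  then obtain \<gamma> where a: "a < ereal \<gamma>" and "ereal \<gamma> < L" using ereal_dense2 by blast
  then obtain R0 where R0: "\<And>r. r \<ge> R0 \<Longrightarrow> ereal \<gamma> \<le> l r" using approx by blast
  have late: "a < Max (l ` {1..r})" if "max R0 1 \<le> r" for r
  proof -
    have "ereal \<gamma> \<le> l r" using R0 that by simp
    also have "\<dots> \<le> Max (l ` {1..r})" using that by (intro Max_ge) auto
    finally show ?thesis using a by simp
  qed
  show "\<forall>\<^sub>F r in sequentially. a < Max (l ` {1..r})"
    by (rule eventually_sequentiallyI[OF late])
next
  fix a assume "L < a"
  have "Max (l ` {1..r}) < a" if "1 \<le> r" for r
  proof -
    have "l i < a" if "i \<in> {1..r}" for i
      using le[of i] that \<open>L < a\<close> by simp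
    with that show ?thesis by (subst Max_less_iff) auto
  qed
  then show "\<forall>\<^sub>F r in sequentially. Max (l ` {1..r}) < a"
    by (rule eventually_sequentiallyI)
qed

theorem theorem4p1:
  fixes n m d :: nat and p :: mpoly and g :: "nat \<Rightarrow> mpoly"
    and R \<beta> :: real and \<eta> :: "nat \<Rightarrow> real"
    and S :: "(nat \<Rightarrow> real) set" and pstar :: ereal
    and l mr :: "nat \<Rightarrow> ereal"
  assumes vars: "mp_vars p \<subseteq> {..<n}" "\<And>i. i \<in> {1..m} \<Longrightarrow> mp_vars (g i) \<subseteq> {..<n}"
    and d_def: "d = max 1 ((Max (insert (mp_deg p) ((\<lambda>i. mp_deg (g i)) ` {1..m})) + 1) div 2)"
    and S_def: "S = {x. (\<forall>i\<ge>n. x i = 0) \<and> (\<forall>i\<in>{1..m}. mp_eval x (g i) \<ge> 0)}"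
    and pstar_def: "pstar = Inf ((\<lambda>x. ereal (mp_eval x p)) ` S)"
    and R_pos: "R > 0"
    and R_bound: "\<And>x. x \<in> S \<Longrightarrow> (\<Sum>i<n. x i ^ 2) \<le> R"
    and eta_bound: "\<And>i x. i \<in> {1..m} \<Longrightarrow> x \<in> S \<Longrightarrow> mp_eval x (g i) \<le> \<eta> i"
    and beta_bound: "\<And>x. x \<in> S \<Longrightarrow> - mp_eval x p \<le> \<beta>"
    and l_def: "\<And>r. l r = Sup (ereal ` {\<gamma>. f_gamma n m d p g R \<eta> \<beta> \<gamma>
                   - mp_const (1 / real r) * (\<Sum>i<n + m + 3. mp_var i ^ 2) ^ (2*d)
                   \<in> Pol r (n + m + 3) (2*d)})"
    and mr_def: "\<And>r. mr r = Max (l ` {1..r})"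
  shows "(\<forall>r\<ge>1. mr r \<le> pstar) \<and> (\<forall>r\<ge>1. mr r \<le> mr (Suc r)) \<and> mr \<longlonglongrightarrow> pstar"
proof -
  interpret compact_pop n m d p g R \<beta> \<eta> S pstar
    by (rule compact_pop.intro; fact vars d_def S_def pstar_def R_bound eta_bound beta_bound)
  have l_le: "l r \<le> pstar" if "r \<ge> 1" for r
    unfolding l_def using Pol_member_imp_le_pstar[OF that] by (auto intro: Sup_least)
  have l_approx: "\<exists>R0. \<forall>r\<ge>R0. ereal \<gamma> \<le> l r" if "ereal \<gamma> < pstar" for \<gamma>
    using eventually_Pol_member_F[OF that] unfolding l_def by (auto intro: Sup_upper)
  have "mr r \<le> pstar" if "r \<ge> 1" for r
    using that l_le by (simp add: mr_def)
  moreover have "mr r \<le> mr (Suc r)" if "r \<ge> 1" for r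
    unfolding mr_def using that by (intro Max_mono) auto
  moreover have "mr = (\<lambda>r. Max (l ` {1..r}))"
    using mr_def by (simp add: fun_eq_iff)
  then have "mr \<longlonglongrightarrow> pstar"
    using running_Max_tendsto[OF l_le l_approx] by simp
  ultimately show ?thesis by blast
qed

end
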